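(* Define $\hat\psi,\hat\psi^*$ on horizontal edges of the lattice slit-strip by $\hat\psi(x'+iy)=T^{-y}\psi_{x'}T^{y}$, $\hat\psi^*(x'+iy)=T^{-y}\psi^*_{x'}T^{y}$ and $\hat\psi(x'-iy)=(T^{slit})^{y}\psi_{x'}(T^{slit})^{-y}$, $\hat\psi^*(x'-iy)=(T^{slit})^{y}\psi^*_{x'}(T^{slit})^{-y}$ for $x'\in C^*$, $y\in\mathbb Z_{\ge0}$. There exist unique extensions $\hat\psi,\hat\psi^*:E_{slit}\to\mathrm{CliffGen}$ to all edges of the slit-strip such that: for any edges $z_1,z_2$ adjacent to a common vertex $v$ and a common face with centre $p$ of the slit-strip, $\hat\psi(z_1)+\frac{i|v-p|}{v-p}\hat\psi^*(z_1)=\hat\psi(z_2)+\frac{i|v-p|}{v-p}\hat\psi^*(z_2)$; and $\hat\psi(L)+i\hat\psi^*(L)=0$ for every left boundary edge $L$ and $\hat\psi(R)-i\hat\psi^*(R)=0$ for every right boundary edge $R$.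
   Context: Fix integers $a<0<b$, $C=\{a,\dots,b\}$, $C^*=\{a+\frac12,\dots,b-\frac12\}$. $\tilde V$ has orthonormal basis $(e_\rho)_{\rho\in\{\pm1\}^C}$. For $x'\in C^*$, $\varsigma_{x'}(\rho)$ flips the signs of $\rho_x$ for $x<x'$; $\psi_{x'}e_\rho=\frac{-\rho_{x'-1/2}+i\rho_{x'+1/2}}{\sqrt2}e_{\varsigma_{x'}(\rho)}$, $\psi^*_{x'}e_\rho=\frac{-i\rho_{x'-1/2}+\rho_{x'+1/2}}{\sqrt2}e_{\varsigma_{x'}(\rho)}$; $\mathrm{CliffGen}$ is their complex span. With $\beta=\frac12\log(\sqrt2+1)$: $T_h^{1/2}$ is diagonal with entries $\exp(\frac\beta2\sum_{x=a}^{b-1}\rho_x\rho_{x+1})$; $e_\tau^\dagger T_ve_\rho=\exp(\beta\sum_{x=a}^b\rho_x\tau_x)\delta_{\tau_a\rho_a}\delta_{\tau_b\rho_b}$; $e_\tau^\dagger T^{slit}_ve_\rho=\exp(\beta\sum_{x=a}^b\rho_x\tau_x)\delta_{\tau_a\rho_a}\delta_{\tau_0\rho_0}\delta_{\tau_b\rho_b}$; $T=T_h^{1/2}T_vT_h^{1/2}$ and $T^{slit}=T_h^{1/2}T^{slit}_vT_h^{1/2}$ (both invertible). The lattice slit-strip is the multigraph with vertices $C\times\mathbb Z\subset\mathbb C$ and nearest-neighbour edges $E_{slit}$, except that each edge between $-iy$ and $-i(y+1)$, $y\in\mathbb Z_{\ge0}$, is doubled, one copy being the left side ($0^-$) and the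 other the right side ($0^+$) of the slit; faces adjacent to the slit use the copy on their side. Left boundary edges are the vertical edges $a+iy'$ and the slit edges on the right side $0^++iy'$ ($y'<0$); right boundary edges are the vertical edges $b+iy'$ and the slit edges on the left side $0^-+iy'$ ($y'<0$), $y'\in\mathbb Z+\frac12$. *)

theory Defs
  imports Complex_Main
begin

text \<open>A spin configuration rho in {+1,-1}^C, C = {a..b}, is represented as an
  integer-valued function with values in {-1,1} on C and 0 outside C.\<close>
definition Conf :: "int \<Rightarrow> int \<Rightarrow> (int \<Rightarrow> int) set" where
  "Conf a b = {\<rho>. (\<forall>x\<in>{a..b}. \<rho> x \<in> {-1, 1}) \<and> (\<forall>x. x \<notin> {a..b} \<longrightarrow> \<rho> x = 0)}"

text \<open>Linear operators on V~ are given by their matrices M tau rho = e_tau^dagger M e_rho;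
  entries outside Conf a b are required to vanish (extensional matrices).\<close>
type_synonym op = "(int \<Rightarrow> int) \<Rightarrow> (int \<Rightarrow> int) \<Rightarrow> complex"

definition Ops :: "int \<Rightarrow> int \<Rightarrow> op set" where
  "Ops a b = {M. \<forall>\<tau> \<rho>. \<not> (\<tau> \<in> Conf a b \<and> \<rho> \<in> Conf a b) \<longrightarrow> M \<tau> \<rho> = 0}"

definition mk_op :: "int \<Rightarrow> int \<Rightarrow> op \<Rightarrow> op" where
  "mk_op a b M = (\<lambda>\<tau> \<rho>. if \<tau> \<in> Conf a b \<and> \<rho> \<in> Conf a b then M \<tau> \<rho> else 0)"

definition mmult :: "int \<Rightarrow> int \<Rightarrow> op \<Rightarrow> op \<Rightarrow> op" where
  "mmult a b M N = mk_op a b (\<lambda>\<tau> \<rho>. \<Sum>\<sigma>\<in>Conf a b. M \<tau> \<sigma> * N \<sigma> \<rho>)"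

definition mid :: "int \<Rightarrow> int \<Rightarrow> op" where
  "mid a b = mk_op a b (\<lambda>\<tau> \<rho>. if \<tau> = \<rho> then 1 else 0)"

definition madd :: "op \<Rightarrow> op \<Rightarrow> op" where
  "madd M N = (\<lambda>\<tau> \<rho>. M \<tau> \<rho> + N \<tau> \<rho>)"

definition msc :: "complex \<Rightarrow> op \<Rightarrow> op" where
  "msc c M = (\<lambda>\<tau> \<rho>. c * M \<tau> \<rho>)"

definition mzero :: op where
  "mzero = (\<lambda>\<tau> \<rho>. 0)"

fun mpow :: "int \<Rightarrow> int \<Rightarrow> op \<Rightarrow> nat \<Rightarrow> op" where
  "mpow a b M 0 = mid a b"
| "mpow a b M (Suc n) = mmult a b M (mpow a b M n)"

definition minv :: "int \<Rightarrow> int \<Rightarrow> op \<Rightarrow> op" where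
  "minv a b M = (THE N. N \<in> Ops a b \<and> mmult a b M N = mid a b \<and> mmult a b N M = mid a b)"

text \<open>A half-integer x' in C^* is encoded by the integer k with x' = k + 1/2, a \<le> k < b.
  varsigma_{x'} flips rho_x for x < x', i.e. x \<le> k.\<close>
definition vsig :: "int \<Rightarrow> (int \<Rightarrow> int) \<Rightarrow> (int \<Rightarrow> int)" where
  "vsig k \<rho> = (\<lambda>x. if x \<le> k then - \<rho> x else \<rho> x)"

definition psi :: "int \<Rightarrow> int \<Rightarrow> int \<Rightarrow> op" where
  "psi a b k = mk_op a b (\<lambda>\<tau> \<rho>. if \<tau> = vsig k \<rho>
      then (- of_int (\<rho> k) + \<i> * of_int (\<rho> (k + 1))) / complex_of_real (sqrt 2) else 0)"

definition psis :: "int \<Rightarrow> int \<Rightarrow> int \<Rightarrow> op" where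
  "psis a b k = mk_op a b (\<lambda>\<tau> \<rho>. if \<tau> = vsig k \<rho>
      then (- \<i> * of_int (\<rho> k) + of_int (\<rho> (k + 1))) / complex_of_real (sqrt 2) else 0)"

definition CliffGen :: "int \<Rightarrow> int \<Rightarrow> op set" where
  "CliffGen a b = {M. \<exists>c d :: int \<Rightarrow> complex.
      M = (\<lambda>\<tau> \<rho>. \<Sum>k\<in>{a..<b}. c k * psi a b k \<tau> \<rho> + d k * psis a b k \<tau> \<rho>)}"

definition beta :: real where
  "beta = ln (sqrt 2 + 1) / 2"

definition Th_half :: "int \<Rightarrow> int \<Rightarrow> op" where
  "Th_half a b = mk_op a b (\<lambda>\<tau> \<rho>. if \<tau> = \<rho>
      then complex_of_real (exp (beta / 2 * (\<Sum>x\<in>{a..<b}. of_int (\<rho> x * \<rho> (x + 1))))) else 0)"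

definition Tv :: "int \<Rightarrow> int \<Rightarrow> op" where
  "Tv a b = mk_op a b (\<lambda>\<tau> \<rho>.
      complex_of_real (exp (beta * (\<Sum>x\<in>{a..b}. of_int (\<rho> x * \<tau> x))))
      * (if \<tau> a = \<rho> a \<and> \<tau> b = \<rho> b then 1 else 0))"

definition Tv_slit :: "int \<Rightarrow> int \<Rightarrow> op" where
  "Tv_slit a b = mk_op a b (\<lambda>\<tau> \<rho>.
      complex_of_real (exp (beta * (\<Sum>x\<in>{a..b}. of_int (\<rho> x * \<tau> x))))
      * (if \<tau> a = \<rho> a \<and> \<tau> 0 = \<rho> 0 \<and> \<tau> b = \<rho> b then 1 else 0))"

definition Tmat :: "int \<Rightarrow> int \<Rightarrow> op" where
  "Tmat a b = mmult a b (mmult a b (Th_half a b) (Tv a b)) (Th_half a b)"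

definition Tslit :: "int \<Rightarrow> int \<Rightarrow> op" where
  "Tslit a b = mmult a b (mmult a b (Th_half a b) (Tv_slit a b)) (Th_half a b)"

text \<open>Edges:
  Hor k y   : horizontal edge between k+iy and (k+1)+iy (midpoint (k+1/2)+iy), a \<le> k < b;
  Ver x m   : vertical edge between x+im and x+i(m+1) (midpoint x+i(m+1/2)), a \<le> x \<le> b,
              not on the slit (i.e. not x = 0 with m < 0);
  SlitM m   : left-side copy (0^-) of the slit edge between im and i(m+1), m < 0;
  SlitP m   : right-side copy (0^+) of the slit edge between im and i(m+1), m < 0.\<close>
datatype edge = Hor int int | Ver int int | SlitM int | SlitP int

definition Eslit :: "int \<Rightarrow> int \<Rightarrow> edge set" where
  "Eslit a b = {Hor k y | k y. a \<le> k \<and> k < b}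
     \<union> {Ver x m | x m. a \<le> x \<and> x \<le> b \<and> \<not> (x = 0 \<and> m < 0)}
     \<union> {SlitM m | m. m < 0} \<union> {SlitP m | m. m < 0}"

definition pt :: "int \<Rightarrow> int \<Rightarrow> complex" where
  "pt x y = Complex (of_int x) (of_int y)"

fun endpoints :: "edge \<Rightarrow> complex set" where
  "endpoints (Hor k y) = {pt k y, pt (k + 1) y}"
| "endpoints (Ver x m) = {pt x m, pt x (m + 1)}"
| "endpoints (SlitM m) = {pt 0 m, pt 0 (m + 1)}"
| "endpoints (SlitP m) = {pt 0 m, pt 0 (m + 1)}"

text \<open>The face with lower-left corner x+iy (a \<le> x < b); faces adjacent to the slit
  use the copy of the slit edge on their side.\<close>
definition face_edges :: "int \<Rightarrow> int \<Rightarrow> edge set" where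
  "face_edges x y = {Hor x y, Hor x (y + 1),
      (if x = 0 \<and> y < 0 then SlitP y else Ver x y),
      (if x + 1 = 0 \<and> y < 0 then SlitM y else Ver (x + 1) y)}"

definition face_centre :: "int \<Rightarrow> int \<Rightarrow> complex" where
  "face_centre x y = Complex (of_int x + 1/2) (of_int y + 1/2)"

definition hor_psi :: "int \<Rightarrow> int \<Rightarrow> (int \<Rightarrow> int \<Rightarrow> int \<Rightarrow> op) \<Rightarrow> int \<Rightarrow> int \<Rightarrow> op" where
  "hor_psi a b P k y =
     (if 0 \<le> y then
        mmult a b (mmult a b (mpow a b (minv a b (Tmat a b)) (nat y)) (P a b k)) (mpow a b (Tmat a b) (nat y))
      else
        mmult a b (mmult a b (mpow a b (Tslit a b) (nat (- y))) (P a b k)) (mpow a b (minv a b (Tslit a b)) (nat (- y))))"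

definition slit_ext :: "int \<Rightarrow> int \<Rightarrow> (edge \<Rightarrow> op) \<Rightarrow> (edge \<Rightarrow> op) \<Rightarrow> bool" where
  "slit_ext a b ph phs \<longleftrightarrow>
     (\<forall>e\<in>Eslit a b. ph e \<in> CliffGen a b \<and> phs e \<in> CliffGen a b)
   \<and> (\<forall>k y. a \<le> k \<and> k < b \<longrightarrow>
        ph (Hor k y) = hor_psi a b psi k y \<and> phs (Hor k y) = hor_psi a b psis k y)
   \<and> (\<forall>x y z1 z2 v. a \<le> x \<and> x < b \<and> z1 \<in> face_edges x y \<and> z2 \<in> face_edges x y
        \<and> v \<in> endpoints z1 \<and> v \<in> endpoints z2 \<longrightarrow>
        (let p = face_centre x y; c = \<i> * complex_of_real (cmod (v - p)) / (v - p) in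
          madd (ph z1) (msc c (phs z1)) = madd (ph z2) (msc c (phs z2))))
   \<and> (\<forall>m. madd (ph (Ver a m)) (msc \<i> (phs (Ver a m))) = mzero)
   \<and> (\<forall>m. m < 0 \<longrightarrow> madd (ph (SlitP m)) (msc \<i> (phs (SlitP m))) = mzero)
   \<and> (\<forall>m. madd (ph (Ver b m)) (msc (- \<i>) (phs (Ver b m))) = mzero)
   \<and> (\<forall>m. m < 0 \<longrightarrow> madd (ph (SlitM m)) (msc (- \<i>) (phs (SlitM m))) = mzero)"

end

theory Submission
  imports Defs "HOL-Library.FuncSet"
begin

(* The prescribed values on row y are conjugates of psi and psi^* by the y-th power of the
   transfer matrix (T above the real axis, T^slit below it), so consecutive rows differ by one
   conjugation. For an edge e, psi(e) + c psi^*(e) is affine in c; on a face, the corner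
   equations at its two lower and two upper corners therefore fix this affine function on each
   vertical side by interpolation. It remains to see that the two faces adjacent to a vertical
   edge give it the same value and that boundary and slit edges satisfy the boundary
   conditions. For a single transfer matrix M these are linear relations between M psi_k,
   M psi^*_k, psi_k M and psi^*_k M, which are checked entrywise: there they reduce to finitely
   many identities in e^beta and sqrt 2, valid at the critical beta. Being linear, the relations
   survive conjugation. Uniqueness holds because two corners with different coefficients
   determine the values on a vertical edge from those on the horizontal ones, and membership in
   CliffGen spreads from row 0, where the values are psi_k and psi^*_k, row by row by solving the
   same relations. *)

lemma Conf_spin: "\<rho> \<in> Conf a b \<Longrightarrow> a \<le> x \<Longrightarrow> x \<le> b \<Longrightarrow> \<rho> x \<in> {-1, 1}"
  unfolding Conf_def by auto

lemma Conf_outside: "\<rho> \<in> Conf a b \<Longrightarrow> \<not> (a \<le> x \<and> x \<le> b) \<Longrightarrow> \<rho> x = 0"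
  unfolding Conf_def by auto

lemma Conf_eqI:
  "\<rho> \<in> Conf a b \<Longrightarrow> \<sigma> \<in> Conf a b \<Longrightarrow> (\<And>x. a \<le> x \<Longrightarrow> x \<le> b \<Longrightarrow> \<rho> x = \<sigma> x) \<Longrightarrow> \<rho> = \<sigma>"
  by (rule ext) (metis Conf_outside)

lemma vsig_apply: "vsig k \<rho> x = (if x \<le> k then - \<rho> x else \<rho> x)"
  unfolding vsig_def by simp

lemma vsig_vsig [simp]: "vsig k (vsig k \<rho>) = \<rho>"
  unfolding vsig_def by auto

lemma vsig_Conf: "\<rho> \<in> Conf a b \<Longrightarrow> vsig k \<rho> \<in> Conf a b"
  unfolding Conf_def vsig_def by auto

lemma Conf_bij_PiE:
  "bij_betw (\<lambda>g x. if x \<in> {a..b} then g x else 0) (PiE {a..b} (\<lambda>_. {-1, 1})) (Conf a b)"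
  by (rule bij_betw_byWitness[where f' = "\<lambda>\<rho>. restrict \<rho> {a..b}"])
     (auto simp: Conf_def PiE_def extensional_def fun_eq_iff)

lemma finite_Conf: "finite (Conf a b)"
  using bij_betw_finite[OF Conf_bij_PiE] by (simp add: finite_PiE)

lemma sum_prod_Conf:
  fixes h :: "int \<Rightarrow> int \<Rightarrow> 'c :: comm_semiring_1"
  shows "(\<Sum>\<sigma>\<in>Conf a b. \<Prod>x\<in>{a..b}. h x (\<sigma> x)) = (\<Prod>x\<in>{a..b}. h x (-1) + h x 1)"
proof -
  have "(\<Sum>\<sigma>\<in>Conf a b. \<Prod>x\<in>{a..b}. h x (\<sigma> x))
      = (\<Sum>g\<in>PiE {a..b} (\<lambda>_. {-1, 1}). \<Prod>x\<in>{a..b}. h x (g x))"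
    by (subst sum.reindex_bij_betw[OF Conf_bij_PiE, symmetric]) (auto intro!: sum.cong prod.cong)
  also have "\<dots> = (\<Prod>x\<in>{a..b}. \<Sum>s\<in>{-1, 1}. h x s)"
    by (rule prod_sum_PiE[symmetric]) auto
  finally show ?thesis by simp
qed

lemma prod_delta_Conf:
  assumes "\<tau> \<in> Conf a b" "\<rho> \<in> Conf a b"
  shows "(\<Prod>x\<in>{a..b}. if \<tau> x = \<rho> x then 1 else 0 :: complex) = (if \<tau> = \<rho> then 1 else 0)"
proof -
  have "(\<Prod>x\<in>{a..b}. if \<tau> x = \<rho> x then 1 else 0 :: complex)
      = (if \<forall>x\<in>{a..b}. \<tau> x = \<rho> x then 1 else 0)"
    by (induction rule: finite_induct[OF finite_atLeastAtMost_int]) auto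
  also have "(\<forall>x\<in>{a..b}. \<tau> x = \<rho> x) \<longleftrightarrow> \<tau> = \<rho>"
    using Conf_eqI[OF assms] by auto
  finally show ?thesis .
qed

lemma mk_op_Ops: "mk_op a b M \<in> Ops a b"
  unfolding Ops_def mk_op_def by auto

lemma mk_op_apply: "\<tau> \<in> Conf a b \<Longrightarrow> \<rho> \<in> Conf a b \<Longrightarrow> mk_op a b M \<tau> \<rho> = M \<tau> \<rho>"
  unfolding mk_op_def by simp

lemma mmult_Ops: "mmult a b M N \<in> Ops a b"
  unfolding mmult_def by (rule mk_op_Ops)

lemma mid_Ops: "mid a b \<in> Ops a b"
  unfolding mid_def by (rule mk_op_Ops)

lemma madd_Ops: "M \<in> Ops a b \<Longrightarrow> N \<in> Ops a b \<Longrightarrow> madd M N \<in> Ops a b"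
  unfolding Ops_def madd_def by auto

lemma msc_Ops: "M \<in> Ops a b \<Longrightarrow> msc c M \<in> Ops a b"
  unfolding Ops_def msc_def by auto

lemma mzero_Ops: "mzero \<in> Ops a b"
  unfolding Ops_def mzero_def by auto

lemma Ops_outside: "M \<in> Ops a b \<Longrightarrow> \<not> (\<tau> \<in> Conf a b \<and> \<rho> \<in> Conf a b) \<Longrightarrow> M \<tau> \<rho> = 0"
  unfolding Ops_def by auto

lemma Ops_eqI:
  "M \<in> Ops a b \<Longrightarrow> N \<in> Ops a b
   \<Longrightarrow> (\<And>\<tau> \<rho>. \<tau> \<in> Conf a b \<Longrightarrow> \<rho> \<in> Conf a b \<Longrightarrow> M \<tau> \<rho> = N \<tau> \<rho>) \<Longrightarrow> M = N"
  by (intro ext) (metis Ops_outside)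

lemma mmult_apply:
  "\<tau> \<in> Conf a b \<Longrightarrow> \<rho> \<in> Conf a b \<Longrightarrow> mmult a b M N \<tau> \<rho> = (\<Sum>\<sigma>\<in>Conf a b. M \<tau> \<sigma> * N \<sigma> \<rho>)"
  unfolding mmult_def mk_op_def by simp

lemma mmult_assoc: "mmult a b (mmult a b M N) P = mmult a b M (mmult a b N P)"
proof (rule Ops_eqI[OF mmult_Ops mmult_Ops])
  fix \<tau> \<rho> assume \<tau>: "\<tau> \<in> Conf a b" and \<rho>: "\<rho> \<in> Conf a b"
  have "mmult a b (mmult a b M N) P \<tau> \<rho>
      = (\<Sum>\<sigma>\<in>Conf a b. (\<Sum>\<sigma>'\<in>Conf a b. M \<tau> \<sigma>' * N \<sigma>' \<sigma>) * P \<sigma> \<rho>)"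
    using \<tau> \<rho> by (simp add: mmult_apply cong: sum.cong)
  also have "\<dots> = (\<Sum>\<sigma>'\<in>Conf a b. M \<tau> \<sigma>' * (\<Sum>\<sigma>\<in>Conf a b. N \<sigma>' \<sigma> * P \<sigma> \<rho>))"
    by (simp add: sum_distrib_left sum_distrib_right mult.assoc) (rule sum.swap)
  also have "\<dots> = mmult a b M (mmult a b N P) \<tau> \<rho>"
    using \<tau> \<rho> by (simp add: mmult_apply cong: sum.cong)
  finally show "mmult a b (mmult a b M N) P \<tau> \<rho> = mmult a b M (mmult a b N P) \<tau> \<rho>" .
qed

definition diag :: "int \<Rightarrow> int \<Rightarrow> ((int \<Rightarrow> int) \<Rightarrow> complex) \<Rightarrow> op" where
  "diag a b g = mk_op a b (\<lambda>\<tau> \<rho>. if \<tau> = \<rho> then g \<rho> else 0)"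

lemma mmult_diag_left:
  assumes "\<tau> \<in> Conf a b" "\<rho> \<in> Conf a b"
  shows "mmult a b (diag a b g) N \<tau> \<rho> = g \<tau> * N \<tau> \<rho>"
proof -
  have "mmult a b (diag a b g) N \<tau> \<rho> = (\<Sum>\<sigma>\<in>Conf a b. if \<tau> = \<sigma> then g \<tau> * N \<sigma> \<rho> else 0)"
    using assms by (auto simp: mmult_apply diag_def mk_op_apply intro!: sum.cong)
  then show ?thesis using assms by (simp add: finite_Conf)
qed

lemma mmult_diag_right:
  assumes "\<tau> \<in> Conf a b" "\<rho> \<in> Conf a b"
  shows "mmult a b N (diag a b g) \<tau> \<rho> = N \<tau> \<rho> * g \<rho>"
proof -
  have "mmult a b N (diag a b g) \<tau> \<rho> = (\<Sum>\<sigma>\<in>Conf a b. if \<sigma> = \<rho> then N \<tau> \<sigma> * g \<rho> else 0)"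
    using assms by (auto simp: mmult_apply diag_def mk_op_apply intro!: sum.cong)
  then show ?thesis using assms by (simp add: finite_Conf)
qed

lemma mid_eq_diag: "mid a b = diag a b (\<lambda>_. 1)"
  unfolding mid_def diag_def ..

lemma mmult_mid_left: "M \<in> Ops a b \<Longrightarrow> mmult a b (mid a b) M = M"
  by (rule Ops_eqI[OF mmult_Ops]) (simp_all add: mid_eq_diag mmult_diag_left)

lemma mmult_mid_right: "M \<in> Ops a b \<Longrightarrow> mmult a b M (mid a b) = M"
  by (rule Ops_eqI[OF mmult_Ops]) (simp_all add: mid_eq_diag mmult_diag_right)

lemma mmult_diag_diag: "mmult a b (diag a b g) (diag a b h) = diag a b (\<lambda>\<rho>. g \<rho> * h \<rho>)"
proof (rule Ops_eqI[OF mmult_Ops])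
  show "diag a b (\<lambda>\<rho>. g \<rho> * h \<rho>) \<in> Ops a b" unfolding diag_def by (rule mk_op_Ops)
  fix \<tau> \<rho> assume "\<tau> \<in> Conf a b" "\<rho> \<in> Conf a b"
  then show "mmult a b (diag a b g) (diag a b h) \<tau> \<rho> = diag a b (\<lambda>\<rho>. g \<rho> * h \<rho>) \<tau> \<rho>"
    by (simp add: mmult_diag_left) (simp add: diag_def mk_op_apply)
qed

lemma minv_eqI:
  assumes "N \<in> Ops a b" "mmult a b M N = mid a b" "mmult a b N M = mid a b"
  shows "minv a b M = N"
  unfolding minv_def
proof (rule the_equality)
  fix N' assume N': "N' \<in> Ops a b \<and> mmult a b M N' = mid a b \<and> mmult a b N' M = mid a b"
  then have "N' = mmult a b N' (mmult a b M N)"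
    using assms by (simp add: mmult_mid_right)
  also have "\<dots> = mmult a b (mmult a b N' M) N" by (simp add: mmult_assoc)
  also have "\<dots> = N" using N' assms(1) by (simp add: mmult_mid_left)
  finally show "N' = N" .
qed (use assms in blast)

lemma mpow_Suc_right: "M \<in> Ops a b \<Longrightarrow> mpow a b M (Suc n) = mmult a b (mpow a b M n) M"
proof (induction n)
  case (Suc n)
  have "mpow a b M (Suc (Suc n)) = mmult a b M (mmult a b (mpow a b M n) M)"
    using Suc by simp
  also have "\<dots> = mmult a b (mpow a b M (Suc n)) M" by (simp add: mmult_assoc)
  finally show ?case .
qed (simp add: mmult_mid_left mmult_mid_right)

lemma mmult_madd_left: "mmult a b (madd M N) P = madd (mmult a b M P) (mmult a b N P)"
proof (intro ext)
  fix \<tau> \<rho>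
  show "mmult a b (madd M N) P \<tau> \<rho> = madd (mmult a b M P) (mmult a b N P) \<tau> \<rho>"
    unfolding mmult_def mk_op_def madd_def by (simp add: distrib_right sum.distrib)
qed

lemma mmult_madd_right: "mmult a b P (madd M N) = madd (mmult a b P M) (mmult a b P N)"
proof (intro ext)
  fix \<tau> \<rho>
  show "mmult a b P (madd M N) \<tau> \<rho> = madd (mmult a b P M) (mmult a b P N) \<tau> \<rho>"
    unfolding mmult_def mk_op_def madd_def by (simp add: distrib_left sum.distrib)
qed

lemma mmult_msc_left: "mmult a b (msc c M) P = msc c (mmult a b M P)"
proof (intro ext)
  fix \<tau> \<rho>
  show "mmult a b (msc c M) P \<tau> \<rho> = msc c (mmult a b M P) \<tau> \<rho>"
    unfolding mmult_def mk_op_def msc_def by (simp add: sum_distrib_left mult.assoc)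
qed

lemma mmult_msc_right: "mmult a b P (msc c M) = msc c (mmult a b P M)"
proof (intro ext)
  fix \<tau> \<rho>
  show "mmult a b P (msc c M) \<tau> \<rho> = msc c (mmult a b P M) \<tau> \<rho>"
    unfolding mmult_def mk_op_def msc_def by (simp add: sum_distrib_left mult.left_commute)
qed

definition op_linear :: "(op \<Rightarrow> op) \<Rightarrow> bool" where
  "op_linear f \<longleftrightarrow> (\<forall>X Y. f (madd X Y) = madd (f X) (f Y)) \<and> (\<forall>c X. f (msc c X) = msc c (f X))"

lemma op_linear_mmult_left: "op_linear (mmult a b P)"
  unfolding op_linear_def by (simp add: mmult_madd_right mmult_msc_right)

lemma op_linear_mmult_right: "op_linear (\<lambda>X. mmult a b X Q)"
  unfolding op_linear_def by (simp add: mmult_madd_left mmult_msc_left)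

lemma op_linear_comp: "op_linear f \<Longrightarrow> op_linear g \<Longrightarrow> op_linear (f \<circ> g)"
  unfolding op_linear_def by simp

lemma op_linear_mzero:
  assumes "op_linear f"
  shows "f mzero = mzero"
proof -
  have zero: "msc 0 X = mzero" for X by (simp add: msc_def mzero_def)
  have "f mzero = f (msc 0 mzero)" by (simp only: zero)
  also have "\<dots> = msc 0 (f mzero)" using assms by (simp add: op_linear_def)
  finally show ?thesis by (simp only: zero)
qed

abbreviation corner :: "complex \<Rightarrow> op \<Rightarrow> op \<Rightarrow> op" where
  "corner c X Xs \<equiv> madd X (msc c Xs)"

lemma corner_apply: "corner c X Xs \<tau> \<rho> = X \<tau> \<rho> + c * Xs \<tau> \<rho>"
  by (simp add: madd_def msc_def)

definition interp :: "complex \<Rightarrow> complex \<Rightarrow> op \<Rightarrow> op \<Rightarrow> complex \<Rightarrow> op" where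
  "interp c0 c1 U V c = madd (msc ((c1 - c) / (c1 - c0)) U) (msc ((c - c0) / (c1 - c0)) V)"

lemma interp_apply:
  "interp c0 c1 U V c \<tau> \<rho> = (c1 - c) / (c1 - c0) * U \<tau> \<rho> + (c - c0) / (c1 - c0) * V \<tau> \<rho>"
  by (simp add: interp_def madd_def msc_def)

lemma interp_start: "c0 \<noteq> c1 \<Longrightarrow> interp c0 c1 U V c0 = U"
  by (simp add: interp_apply fun_eq_iff)

lemma interp_end: "c0 \<noteq> c1 \<Longrightarrow> interp c0 c1 U V c1 = V"
  by (simp add: interp_apply fun_eq_iff)

lemma op_linear_interp: "op_linear f \<Longrightarrow> f (interp c0 c1 U V c) = interp c0 c1 (f U) (f V) c"
  by (simp add: op_linear_def interp_def)

lemma interp_Ops: "U \<in> Ops a b \<Longrightarrow> V \<in> Ops a b \<Longrightarrow> interp c0 c1 U V c \<in> Ops a b"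
  unfolding interp_def by (intro madd_Ops msc_Ops)

lemma corner_interp:
  assumes "c0 \<noteq> c1"
  shows "corner c (interp c0 c1 U V 0) (madd (interp c0 c1 U V 1) (msc (- 1) (interp c0 c1 U V 0)))
       = interp c0 c1 U V c"
proof -
  have "c1 - c0 \<noteq> 0" using assms by simp
  then show ?thesis
    by (simp add: fun_eq_iff corner_apply interp_apply madd_def msc_def divide_simps)
       (simp add: algebra_simps)
qed

section \<open>Transfer matrices and their inverses\<close>

lemma prod_indicator:
  "finite A \<Longrightarrow> (\<Prod>x\<in>A. if P x then 0 else 1 :: 'a :: comm_semiring_1) = (if \<exists>x\<in>A. P x then 0 else 1)"
  by (induction A rule: finite_induct) auto

definition spin_overlap :: "int \<Rightarrow> int \<Rightarrow> (int \<Rightarrow> int) \<Rightarrow> (int \<Rightarrow> int) \<Rightarrow> real" where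
  "spin_overlap a b \<tau> \<rho> = (\<Sum>x\<in>{a..b}. real_of_int (\<rho> x * \<tau> x))"

definition agree_on :: "int set \<Rightarrow> (int \<Rightarrow> int) \<Rightarrow> (int \<Rightarrow> int) \<Rightarrow> bool" where
  "agree_on D \<tau> \<rho> \<longleftrightarrow> (\<forall>d\<in>D. \<tau> d = \<rho> d)"

definition Tv_pinned :: "int \<Rightarrow> int \<Rightarrow> int set \<Rightarrow> op" where
  "Tv_pinned a b D = mk_op a b (\<lambda>\<tau> \<rho>.
     complex_of_real (exp (beta * spin_overlap a b \<tau> \<rho>)) * (if agree_on D \<tau> \<rho> then 1 else 0))"

lemma Tv_eq_pinned: "Tv a b = Tv_pinned a b {a, b}"
  unfolding Tv_def Tv_pinned_def spin_overlap_def agree_on_def by simp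

lemma Tv_slit_eq_pinned: "Tv_slit a b = Tv_pinned a b {a, 0, b}"
  unfolding Tv_slit_def Tv_pinned_def spin_overlap_def agree_on_def
  by (simp add: conj_commute conj_left_commute)

definition site_kernel :: "int set \<Rightarrow> int \<Rightarrow> int \<Rightarrow> int \<Rightarrow> complex" where
  "site_kernel D x t s =
     complex_of_real (exp (beta * of_int (s * t))) * (if x \<in> D \<and> t \<noteq> s then 0 else 1)"

text \<open>At a free site the factor \<open>1/2\<close> is \<open>1 / (e\<^sup>2\<^sup>\<beta> - e\<^sup>-\<^sup>2\<^sup>\<beta>)\<close> for the critical \<open>\<beta>\<close>.\<close>
definition site_kernel_inv :: "int set \<Rightarrow> int \<Rightarrow> int \<Rightarrow> int \<Rightarrow> complex" where
  "site_kernel_inv D x t s =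
     (if x \<in> D then (if t = s then complex_of_real (exp (- beta)) else 0)
      else complex_of_real (of_int (t * s) * exp (beta * of_int (t * s)) / 2))"

lemma exp_beta_square: "exp beta * exp beta = sqrt 2 + 1"
proof -
  have "exp beta * exp beta = exp (2 * beta)" by (simp flip: exp_add)
  also have "\<dots> = sqrt 2 + 1" by (simp add: beta_def add_pos_pos)
  finally show ?thesis .
qed

lemma exp_minus_beta: "exp (- beta) = exp beta * (sqrt 2 - 1)"
proof -
  have "(sqrt 2 + 1) * (sqrt 2 - 1) = 1" by (simp add: algebra_simps)
  then have "exp beta * (exp beta * (sqrt 2 - 1)) = 1"
    by (simp only: mult.assoc[symmetric] exp_beta_square)
  then show ?thesis by (simp add: exp_minus field_simps)
qed

lemma exp_minus_beta_square: "exp (- beta) * exp (- beta) = sqrt 2 - 1"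
proof -
  have "exp (- beta) * exp (- beta) = (exp beta * exp beta) * ((sqrt 2 - 1) * (sqrt 2 - 1))"
    by (simp only: exp_minus_beta ac_simps)
  also have "\<dots> = sqrt 2 - 1" unfolding exp_beta_square by (simp add: algebra_simps)
  finally show ?thesis .
qed

lemma site_kernel_inverse:
  assumes "t \<in> {-1, 1}" "u \<in> {-1, 1}"
  shows "site_kernel D x t (-1) * site_kernel_inv D x (-1) u + site_kernel D x t 1 * site_kernel_inv D x 1 u
       = (if t = u then 1 else 0)"
proof -
  have inv: "exp beta * exp (- beta) = 1" by (simp flip: exp_add)
  have diff: "exp beta * exp beta - exp (- beta) * exp (- beta) = 2"
    by (simp add: exp_beta_square exp_minus_beta_square)
  show ?thesis
  proof (cases "x \<in> D")
    case True
    then show ?thesis using assms inv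
      by (auto simp: site_kernel_def site_kernel_inv_def simp flip: of_real_mult)
  next
    case False
    then show ?thesis using assms
      apply (auto simp: site_kernel_def site_kernel_inv_def)
      apply (simp_all flip: of_real_mult of_real_add of_real_diff)
      using inv diff by (simp_all add: field_simps)
  qed
qed

lemma site_kernel_inverse':
  assumes "t \<in> {-1, 1}" "u \<in> {-1, 1}"
  shows "site_kernel_inv D x t (-1) * site_kernel D x (-1) u + site_kernel_inv D x t 1 * site_kernel D x 1 u
       = (if t = u then 1 else 0)"
proof -
  have "site_kernel D x s u = site_kernel D x u s" "site_kernel_inv D x t s = site_kernel_inv D x s t" for s
    by (auto simp: site_kernel_def site_kernel_inv_def mult.commute)
  then show ?thesis using site_kernel_inverse[OF assms(2,1), of D x] by (auto simp: mult.commute)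
qed

lemma mmult_site_products:
  assumes "\<And>x t u. t \<in> {-1, 1} \<Longrightarrow> u \<in> {-1, 1}
             \<Longrightarrow> K x t (-1) * W x (-1) u + K x t 1 * W x 1 u = (if t = u then 1 else 0)"
  shows "mmult a b (mk_op a b (\<lambda>\<tau> \<rho>. \<Prod>x\<in>{a..b}. K x (\<tau> x) (\<rho> x)))
                   (mk_op a b (\<lambda>\<tau> \<rho>. \<Prod>x\<in>{a..b}. W x (\<tau> x) (\<rho> x))) = mid a b"
proof (rule Ops_eqI[OF mmult_Ops mid_Ops])
  fix \<tau> \<rho> assume \<tau>: "\<tau> \<in> Conf a b" and \<rho>: "\<rho> \<in> Conf a b"
  have "mmult a b (mk_op a b (\<lambda>\<tau> \<rho>. \<Prod>x\<in>{a..b}. K x (\<tau> x) (\<rho> x)))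
          (mk_op a b (\<lambda>\<tau> \<rho>. \<Prod>x\<in>{a..b}. W x (\<tau> x) (\<rho> x))) \<tau> \<rho>
      = (\<Sum>\<sigma>\<in>Conf a b. \<Prod>x\<in>{a..b}. K x (\<tau> x) (\<sigma> x) * W x (\<sigma> x) (\<rho> x))"
    using \<tau> \<rho> by (auto simp: mmult_apply mk_op_apply prod.distrib intro!: sum.cong)
  also have "\<dots> = (\<Prod>x\<in>{a..b}. K x (\<tau> x) (-1) * W x (-1) (\<rho> x) + K x (\<tau> x) 1 * W x 1 (\<rho> x))"
    by (rule sum_prod_Conf)
  also have "\<dots> = (\<Prod>x\<in>{a..b}. if \<tau> x = \<rho> x then 1 else 0)"
    using \<tau> \<rho> by (intro prod.cong refl assms) (auto dest: Conf_spin)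
  also have "\<dots> = mid a b \<tau> \<rho>"
    using \<tau> \<rho> by (simp add: prod_delta_Conf mid_def mk_op_apply)
  finally show "mmult a b (mk_op a b (\<lambda>\<tau> \<rho>. \<Prod>x\<in>{a..b}. K x (\<tau> x) (\<rho> x)))
          (mk_op a b (\<lambda>\<tau> \<rho>. \<Prod>x\<in>{a..b}. W x (\<tau> x) (\<rho> x))) \<tau> \<rho> = mid a b \<tau> \<rho>" .
qed

definition Tv_pinned_inv :: "int \<Rightarrow> int \<Rightarrow> int set \<Rightarrow> op" where
  "Tv_pinned_inv a b D = mk_op a b (\<lambda>\<tau> \<rho>. \<Prod>x\<in>{a..b}. site_kernel_inv D x (\<tau> x) (\<rho> x))"

lemma Tv_pinned_eq_prod:
  assumes "D \<subseteq> {a..b}"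
  shows "Tv_pinned a b D = mk_op a b (\<lambda>\<tau> \<rho>. \<Prod>x\<in>{a..b}. site_kernel D x (\<tau> x) (\<rho> x))"
proof -
  have "(\<Prod>x\<in>{a..b}. site_kernel D x (\<tau> x) (\<rho> x))
      = complex_of_real (exp (beta * spin_overlap a b \<tau> \<rho>)) * (if agree_on D \<tau> \<rho> then 1 else 0)" for \<tau> \<rho>
  proof -
    have "(\<Prod>x\<in>{a..b}. site_kernel D x (\<tau> x) (\<rho> x))
        = (\<Prod>x\<in>{a..b}. complex_of_real (exp (beta * of_int (\<rho> x * \<tau> x))))
          * (\<Prod>x\<in>{a..b}. if x \<in> D \<and> \<tau> x \<noteq> \<rho> x then 0 else 1)"
      unfolding site_kernel_def by (rule prod.distrib)
    also have "(\<Prod>x\<in>{a..b}. complex_of_real (exp (beta * of_int (\<rho> x * \<tau> x))))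
        = complex_of_real (exp (beta * spin_overlap a b \<tau> \<rho>))"
      unfolding spin_overlap_def sum_distrib_left exp_sum[OF finite_atLeastAtMost_int] of_real_prod ..
    also have "(\<Prod>x\<in>{a..b}. if x \<in> D \<and> \<tau> x \<noteq> \<rho> x then 0 else 1 :: complex)
        = (if agree_on D \<tau> \<rho> then 1 else 0)"
      using assms by (subst prod_indicator) (auto simp: agree_on_def)
    finally show ?thesis .
  qed
  then show ?thesis unfolding Tv_pinned_def by simp
qed

lemma Tv_pinned_inverse:
  assumes "D \<subseteq> {a..b}"
  shows "mmult a b (Tv_pinned a b D) (Tv_pinned_inv a b D) = mid a b"
    and "mmult a b (Tv_pinned_inv a b D) (Tv_pinned a b D) = mid a b"
  unfolding Tv_pinned_eq_prod[OF assms] Tv_pinned_inv_def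
  by (intro mmult_site_products site_kernel_inverse site_kernel_inverse'; assumption)+

definition horiz_weight :: "int \<Rightarrow> int \<Rightarrow> (int \<Rightarrow> int) \<Rightarrow> real" where
  "horiz_weight a b \<rho> = exp (beta / 2 * (\<Sum>x\<in>{a..<b}. real_of_int (\<rho> x * \<rho> (x + 1))))"

lemma Th_half_eq_diag: "Th_half a b = diag a b (\<lambda>\<rho>. complex_of_real (horiz_weight a b \<rho>))"
  unfolding Th_half_def diag_def horiz_weight_def by simp

definition Th_half_inv :: "int \<Rightarrow> int \<Rightarrow> op" where
  "Th_half_inv a b = diag a b (\<lambda>\<rho>. complex_of_real (1 / horiz_weight a b \<rho>))"

lemma diag_Ops: "diag a b g \<in> Ops a b"
  unfolding diag_def by (rule mk_op_Ops)

lemma Th_half_inverse: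
  "mmult a b (Th_half a b) (Th_half_inv a b) = mid a b"
  "mmult a b (Th_half_inv a b) (Th_half a b) = mid a b"
  by (simp_all add: Th_half_eq_diag Th_half_inv_def mmult_diag_diag mid_eq_diag horiz_weight_def
      flip: of_real_mult)

definition transfer :: "int \<Rightarrow> int \<Rightarrow> int set \<Rightarrow> op" where
  "transfer a b D = mmult a b (mmult a b (Th_half a b) (Tv_pinned a b D)) (Th_half a b)"

definition transfer_inv :: "int \<Rightarrow> int \<Rightarrow> int set \<Rightarrow> op" where
  "transfer_inv a b D = mmult a b (mmult a b (Th_half_inv a b) (Tv_pinned_inv a b D)) (Th_half_inv a b)"

lemma Tmat_eq_transfer: "Tmat a b = transfer a b {a, b}"
  unfolding Tmat_def transfer_def Tv_eq_pinned ..

lemma Tslit_eq_transfer: "Tslit a b = transfer a b {a, 0, b}"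
  unfolding Tslit_def transfer_def Tv_slit_eq_pinned ..

lemma transfer_Ops: "transfer a b D \<in> Ops a b"
  unfolding transfer_def by (rule mmult_Ops)

lemma transfer_inv_Ops: "transfer_inv a b D \<in> Ops a b"
  unfolding transfer_inv_def by (rule mmult_Ops)

lemma mmult_cancel_left:
  "mmult a b X Y = mid a b \<Longrightarrow> Z \<in> Ops a b \<Longrightarrow> mmult a b X (mmult a b Y Z) = Z"
  by (simp add: mmult_assoc[symmetric] mmult_mid_left)

lemma Th_half_Ops: "Th_half a b \<in> Ops a b"
  unfolding Th_half_eq_diag by (rule diag_Ops)

lemma Th_half_inv_Ops: "Th_half_inv a b \<in> Ops a b"
  unfolding Th_half_inv_def by (rule diag_Ops)

lemma transfer_inverse:
  assumes "D \<subseteq> {a..b}"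
  shows "mmult a b (transfer a b D) (transfer_inv a b D) = mid a b"
    and "mmult a b (transfer_inv a b D) (transfer a b D) = mid a b"
  using Tv_pinned_inverse[OF assms]
  by (simp_all add: transfer_def transfer_inv_def mmult_assoc mmult_cancel_left Th_half_inverse
      Th_half_Ops Th_half_inv_Ops mmult_Ops)

lemma minv_transfer: "D \<subseteq> {a..b} \<Longrightarrow> minv a b (transfer a b D) = transfer_inv a b D"
  by (rule minv_eqI[OF transfer_inv_Ops transfer_inverse])

lemma transfer_apply:
  assumes "\<tau> \<in> Conf a b" "\<rho> \<in> Conf a b"
  shows "transfer a b D \<tau> \<rho> = complex_of_real
           (horiz_weight a b \<tau> * exp (beta * spin_overlap a b \<tau> \<rho>) * horiz_weight a b \<rho>)
         * (if agree_on D \<tau> \<rho> then 1 else 0)"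
  using assms
  by (simp add: transfer_def Th_half_eq_diag mmult_diag_left mmult_diag_right Tv_pinned_def mk_op_apply)

definition flip_op :: "int \<Rightarrow> int \<Rightarrow> ((int \<Rightarrow> int) \<Rightarrow> complex) \<Rightarrow> int \<Rightarrow> op" where
  "flip_op a b f k = mk_op a b (\<lambda>\<tau> \<rho>. if \<tau> = vsig k \<rho> then f \<rho> else 0)"

lemma mmult_flip_op_right:
  assumes "\<tau> \<in> Conf a b" "\<rho> \<in> Conf a b"
  shows "mmult a b M (flip_op a b f k) \<tau> \<rho> = M \<tau> (vsig k \<rho>) * f \<rho>"
proof -
  have "mmult a b M (flip_op a b f k) \<tau> \<rho>
      = (\<Sum>\<sigma>\<in>Conf a b. if \<sigma> = vsig k \<rho> then M \<tau> \<sigma> * f \<rho> else 0)"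
    using assms by (auto simp: mmult_apply flip_op_def mk_op_apply intro!: sum.cong)
  then show ?thesis using vsig_Conf[OF assms(2)] by (simp add: finite_Conf)
qed

lemma mmult_flip_op_left:
  assumes "\<tau> \<in> Conf a b" "\<rho> \<in> Conf a b"
  shows "mmult a b (flip_op a b f k) M \<tau> \<rho> = f (vsig k \<tau>) * M (vsig k \<tau>) \<rho>"
proof -
  have "mmult a b (flip_op a b f k) M \<tau> \<rho>
      = (\<Sum>\<sigma>\<in>Conf a b. if \<sigma> = vsig k \<tau> then f \<sigma> * M \<sigma> \<rho> else 0)"
    using assms by (auto simp: mmult_apply flip_op_def mk_op_apply intro!: sum.cong)
  then show ?thesis using vsig_Conf[OF assms(1)] by (simp add: finite_Conf)
qed

definition sqrt2 :: complex where
  "sqrt2 = complex_of_real (sqrt 2)"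

lemma sqrt2_times_sqrt2: "sqrt2 * sqrt2 = 2"
  unfolding sqrt2_def by (simp flip: of_real_mult)

lemma sqrt2_nonzero: "sqrt2 \<noteq> 0"
  unfolding sqrt2_def by simp

definition corner_weight :: "complex \<Rightarrow> int \<Rightarrow> int \<Rightarrow> complex" where
  "corner_weight c s t = ((- of_int s + \<i> * of_int t) + c * (- \<i> * of_int s + of_int t)) / sqrt2"

abbreviation psi_corner :: "int \<Rightarrow> int \<Rightarrow> int \<Rightarrow> complex \<Rightarrow> op" where
  "psi_corner a b k c \<equiv> corner c (psi a b k) (psis a b k)"

lemma psi_corner_eq_flip_op:
  "psi_corner a b k c = flip_op a b (\<lambda>\<rho>. corner_weight c (\<rho> k) (\<rho> (k + 1))) k"
  unfolding psi_def psis_def flip_op_def mk_op_def corner_weight_def sqrt2_def madd_def msc_def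
  by (auto simp: fun_eq_iff add_divide_distrib)

lemma psi_corner_Ops: "psi_corner a b k c \<in> Ops a b"
  unfolding psi_corner_eq_flip_op flip_op_def by (rule mk_op_Ops)

definition expb :: "int \<Rightarrow> complex" where
  "expb n = complex_of_real (exp (beta * of_int n))"

lemma sum_eq_except_one:
  fixes f g :: "'a \<Rightarrow> 'b :: ab_group_add"
  assumes "finite A" "k \<in> A" "\<And>x. x \<in> A \<Longrightarrow> x \<noteq> k \<Longrightarrow> f x = g x"
  shows "sum f A = sum g A + (f k - g k)"
proof -
  have "sum f (A - {k}) = sum g (A - {k})" using assms by (intro sum.cong) auto
  then show ?thesis using assms by (simp add: sum.remove)
qed

lemma horiz_weight_vsig:
  assumes "a \<le> k" "k < b"
  shows "horiz_weight a b (vsig k \<rho>) = horiz_weight a b \<rho> * exp (beta * of_int (- (\<rho> k * \<rho> (k + 1))))"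
proof -
  have "(\<Sum>x\<in>{a..<b}. real_of_int (vsig k \<rho> x * vsig k \<rho> (x + 1)))
      = (\<Sum>x\<in>{a..<b}. real_of_int (\<rho> x * \<rho> (x + 1)))
        + (real_of_int (vsig k \<rho> k * vsig k \<rho> (k + 1)) - real_of_int (\<rho> k * \<rho> (k + 1)))"
    using assms by (intro sum_eq_except_one) (auto simp: vsig_apply)
  then have "(\<Sum>x\<in>{a..<b}. real_of_int (vsig k \<rho> x * vsig k \<rho> (x + 1)))
      = (\<Sum>x\<in>{a..<b}. real_of_int (\<rho> x * \<rho> (x + 1))) - 2 * real_of_int (\<rho> k * \<rho> (k + 1))"
    by (simp add: vsig_apply)
  then have "beta / 2 * (\<Sum>x\<in>{a..<b}. real_of_int (vsig k \<rho> x * vsig k \<rho> (x + 1)))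
      = beta / 2 * (\<Sum>x\<in>{a..<b}. real_of_int (\<rho> x * \<rho> (x + 1))) + beta * of_int (- (\<rho> k * \<rho> (k + 1)))"
    by (simp only:) (simp add: algebra_simps)
  then show ?thesis
    unfolding horiz_weight_def by (simp only: exp_add)
qed

lemma spin_overlap_vsig_swap: "spin_overlap a b (vsig k \<tau>) \<rho> = spin_overlap a b \<tau> (vsig k \<rho>)"
  unfolding spin_overlap_def by (intro sum.cong) (auto simp: vsig_apply)

lemma agree_on_vsig_swap: "agree_on D (vsig k \<tau>) \<rho> = agree_on D \<tau> (vsig k \<rho>)"
  unfolding agree_on_def by (auto simp: vsig_apply)

lemma spin_overlap_vsig_step:
  assumes "a \<le> x" "x \<le> b"
  shows "spin_overlap a b \<tau> (vsig x \<rho>) = spin_overlap a b \<tau> (vsig (x - 1) \<rho>) - 2 * of_int (\<rho> x * \<tau> x)"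
proof -
  have "spin_overlap a b \<tau> (vsig x \<rho>) = spin_overlap a b \<tau> (vsig (x - 1) \<rho>)
      + (real_of_int (vsig x \<rho> x * \<tau> x) - real_of_int (vsig (x - 1) \<rho> x * \<tau> x))"
    unfolding spin_overlap_def using assms by (intro sum_eq_except_one) (auto simp: vsig_apply)
  then show ?thesis by (simp add: vsig_apply)
qed

lemma agree_on_vsig_step: "x \<notin> D \<Longrightarrow> agree_on D \<tau> (vsig x \<rho>) = agree_on D \<tau> (vsig (x - 1) \<rho>)"
  unfolding agree_on_def vsig_def by (metis order.order_iff_strict zle_diff1_eq)

text \<open>The entries \<open>T(\<tau>, \<sigma>\<^sub>k \<rho>)\<close> and \<open>T(\<sigma>\<^sub>k \<tau>, \<rho>)\<close> differ from this common factor only through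
  the horizontal bond \<open>(k, k + 1)\<close>.\<close>
definition flip_entry :: "int \<Rightarrow> int \<Rightarrow> int set \<Rightarrow> (int \<Rightarrow> int) \<Rightarrow> (int \<Rightarrow> int) \<Rightarrow> int \<Rightarrow> complex" where
  "flip_entry a b D \<tau> \<rho> k = complex_of_real
     (horiz_weight a b \<tau> * horiz_weight a b \<rho> * exp (beta * spin_overlap a b \<tau> (vsig k \<rho>)))
     * (if agree_on D \<tau> (vsig k \<rho>) then 1 else 0)"

lemma transfer_flip_right:
  assumes "\<tau> \<in> Conf a b" "\<rho> \<in> Conf a b" "a \<le> k" "k < b"
  shows "transfer a b D \<tau> (vsig k \<rho>) = flip_entry a b D \<tau> \<rho> k * expb (- (\<rho> k * \<rho> (k + 1)))"
  using assms by (simp add: transfer_apply vsig_Conf horiz_weight_vsig flip_entry_def expb_def mult_ac)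

lemma transfer_flip_left:
  assumes "\<tau> \<in> Conf a b" "\<rho> \<in> Conf a b" "a \<le> k" "k < b"
  shows "transfer a b D (vsig k \<tau>) \<rho> = flip_entry a b D \<tau> \<rho> k * expb (- (\<tau> k * \<tau> (k + 1)))"
  using assms
  by (simp add: transfer_apply vsig_Conf horiz_weight_vsig flip_entry_def expb_def mult_ac
      spin_overlap_vsig_swap agree_on_vsig_swap)

lemma flip_entry_step:
  assumes "a \<le> x" "x \<le> b" "x \<notin> D"
  shows "flip_entry a b D \<tau> \<rho> x * expb n = flip_entry a b D \<tau> \<rho> (x - 1) * expb (n - 2 * \<rho> x * \<tau> x)"
  using assms
  by (simp add: flip_entry_def expb_def spin_overlap_vsig_step agree_on_vsig_step algebra_simps
      flip: exp_add of_real_mult)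

lemma flip_entry_eq_0: "\<not> agree_on D \<tau> (vsig k \<rho>) \<Longrightarrow> flip_entry a b D \<tau> \<rho> k = 0"
  by (simp add: flip_entry_def)

lemma transfer_psi_corner_apply:
  assumes "\<tau> \<in> Conf a b" "\<rho> \<in> Conf a b" "a \<le> k" "k < b"
  shows "mmult a b (transfer a b D) (psi_corner a b k c) \<tau> \<rho>
       = flip_entry a b D \<tau> \<rho> k * expb (- (\<rho> k * \<rho> (k + 1))) * corner_weight c (\<rho> k) (\<rho> (k + 1))"
  using assms by (simp add: psi_corner_eq_flip_op mmult_flip_op_right transfer_flip_right)

lemma psi_corner_transfer_apply:
  assumes "\<tau> \<in> Conf a b" "\<rho> \<in> Conf a b" "a \<le> k" "k < b"
  shows "mmult a b (psi_corner a b k c) (transfer a b D) \<tau> \<rho>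
       = flip_entry a b D \<tau> \<rho> k * expb (- (\<tau> k * \<tau> (k + 1))) * corner_weight c (- \<tau> k) (\<tau> (k + 1))"
  using assms
  by (simp add: psi_corner_eq_flip_op mmult_flip_op_left transfer_flip_left vsig_apply mult_ac)

section \<open>The local relations\<close>

text \<open>The coefficients \<open>\<i> |v - p| / (v - p)\<close> at the bottom-left, top-left, bottom-right and
  top-right corner \<open>v\<close> of a face with centre \<open>p\<close>.\<close>
definition cBL :: complex where "cBL = - (1 + \<i>) / sqrt2"
definition cTL :: complex where "cTL = (1 - \<i>) / sqrt2"
definition cBR :: complex where "cBR = (- 1 + \<i>) / sqrt2"
definition cTR :: complex where "cTR = (1 + \<i>) / sqrt2"

lemma corner_coeffs_distinct:
  "cBL \<noteq> cTL" "cBR \<noteq> cTR" "cBL \<noteq> cBR" "cTL \<noteq> cTR"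
  "\<i> \<noteq> cBL" "\<i> \<noteq> cTL" "- \<i> \<noteq> cBR" "- \<i> \<noteq> cTR"
  unfolding cBL_def cTL_def cBR_def cTR_def sqrt2_def by (simp_all add: complex_eq_iff)

text \<open>The coefficients of \<open>interp_apply\<close> at the corners used by the relations, in the literal
  shape in which \<open>interp_apply\<close> produces them (hence \<open>cTR - - \<i>\<close>).\<close>
lemma interp_coeffs:
  "(cTL - cBR) / (cTL - cBL) = 1 - \<i>" "(cBR - cBL) / (cTL - cBL) = \<i>"
  "(cTL - cTR) / (cTL - cBL) = - \<i>" "(cTR - cBL) / (cTL - cBL) = 1 + \<i>"
  "(cTL - \<i>) / (cTL - cBL) = ((1 - \<i>) - \<i> * sqrt2) / 2"
  "(\<i> - cBL) / (cTL - cBL) = ((1 + \<i>) + \<i> * sqrt2) / 2"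
  "(cTR - - \<i>) / (cTR - cBR) = ((1 + \<i>) + \<i> * sqrt2) / 2"
  "(- \<i> - cBR) / (cTR - cBR) = ((1 - \<i>) - \<i> * sqrt2) / 2"
  unfolding cBL_def cTL_def cBR_def cTR_def using sqrt2_nonzero sqrt2_times_sqrt2
  by (simp_all add: divide_simps)

lemma expb_values:
  "expb (-1) = expb 1 * (sqrt2 - 1)"
  "expb 3 = expb 1 * (sqrt2 + 1)"
  "expb (-3) = expb 1 * (3 - 2 * sqrt2)"
proof -
  have "exp (beta * 3) = exp beta * (exp beta * exp beta)" by (simp flip: exp_add)
  then have p3: "exp (beta * 3) = exp beta * (sqrt 2 + 1)" by (simp only: exp_beta_square)
  have "exp (- (beta * 3)) = exp (- beta) * (exp (- beta) * exp (- beta))" by (simp flip: exp_add)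
  also have "\<dots> = exp beta * ((sqrt 2 - 1) * (sqrt 2 - 1))"
    by (simp only: exp_minus_beta_square) (simp add: exp_minus_beta mult.assoc)
  also have "\<dots> = exp beta * (3 - 2 * sqrt 2)" by (simp add: algebra_simps)
  finally have m3: "exp (- (beta * 3)) = exp beta * (3 - 2 * sqrt 2)" .
  show "expb (-1) = expb 1 * (sqrt2 - 1)" "expb 3 = expb 1 * (sqrt2 + 1)"
    "expb (-3) = expb 1 * (3 - 2 * sqrt2)"
    unfolding expb_def sqrt2_def by (simp_all add: exp_minus_beta p3 m3)
qed

lemma corner_weight_spins:
  "corner_weight (u / sqrt2) 1 1 = ((-1 + \<i>) * sqrt2 + u * (1 - \<i>)) / 2"
  "corner_weight (u / sqrt2) 1 (-1) = ((-1 - \<i>) * sqrt2 + u * (-1 - \<i>)) / 2"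
  "corner_weight (u / sqrt2) (-1) 1 = ((1 + \<i>) * sqrt2 + u * (1 + \<i>)) / 2"
  "corner_weight (u / sqrt2) (-1) (-1) = ((1 - \<i>) * sqrt2 + u * (-1 + \<i>)) / 2"
  unfolding corner_weight_def using sqrt2_nonzero
  by (simp_all add: field_simps sqrt2_times_sqrt2)

lemma sqrt2_times_sqrt2_assoc: "sqrt2 * (sqrt2 * z) = 2 * z"
  by (simp add: mult.assoc[symmetric] sqrt2_times_sqrt2)

lemma spin_cases: "(s :: int) \<in> {-1, 1} \<Longrightarrow> s = -1 \<or> s = 1"
  by auto

text \<open>Each local identity is a finite check over the spins \<open>\<plusminus>1\<close>: the weights \<open>e\<^sup>\<beta>\<^sup>n\<close>,
  \<open>n \<in> {\<plusminus>1, \<plusminus>3}\<close>, are \<open>e\<^sup>\<beta>\<close> times elements of \<open>\<int>[\<surd>2]\<close> because \<open>e\<^sup>2\<^sup>\<beta> = \<surd>2 + 1\<close>.\<close>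

lemma local_identity_lower:
  assumes "r1 \<in> {-1, 1}" "r2 \<in> {-1, 1}" "r3 \<in> {-1, 1}" "t2 \<in> {-1, 1}" "t3 \<in> {-1, 1}"
  shows "(1 - \<i>) * expb (- (r2 * r3) - 2 * r2 * t2) * corner_weight cBL r2 r3
       + \<i> * expb (- (t2 * t3) - 2 * r2 * t2) * corner_weight cTL (- t2) t3
       = expb (- (r1 * r2)) * corner_weight cBR r1 r2"
  using spin_cases[OF assms(1)] spin_cases[OF assms(2)] spin_cases[OF assms(3)]
    spin_cases[OF assms(4)] spin_cases[OF assms(5)]
  unfolding cBL_def cTL_def cBR_def
  by (elim disjE; simp add: expb_values corner_weight_spins;
      simp add: algebra_simps sqrt2_times_sqrt2 sqrt2_times_sqrt2_assoc)

lemma local_identity_upper: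
  assumes "t1 \<in> {-1, 1}" "r2 \<in> {-1, 1}" "r3 \<in> {-1, 1}" "t2 \<in> {-1, 1}" "t3 \<in> {-1, 1}"
  shows "- \<i> * expb (- (r2 * r3) - 2 * r2 * t2) * corner_weight cBL r2 r3
       + (1 + \<i>) * expb (- (t2 * t3) - 2 * r2 * t2) * corner_weight cTL (- t2) t3
       = expb (- (t1 * t2)) * corner_weight cTR (- t1) t2"
  using spin_cases[OF assms(1)] spin_cases[OF assms(2)] spin_cases[OF assms(3)]
    spin_cases[OF assms(4)] spin_cases[OF assms(5)]
  unfolding cBL_def cTL_def cTR_def
  by (elim disjE; simp add: expb_values corner_weight_spins;
      simp add: algebra_simps sqrt2_times_sqrt2 sqrt2_times_sqrt2_assoc)

lemma local_identity_left:
  assumes "r0 \<in> {-1, 1}" "r1 \<in> {-1, 1}" "t1 \<in> {-1, 1}"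
  shows "((1 - \<i>) - \<i> * sqrt2) / 2 * expb (- (r0 * r1)) * corner_weight cBL r0 r1
       + ((1 + \<i>) + \<i> * sqrt2) / 2 * expb (r0 * t1) * corner_weight cTL r0 t1 = 0"
  using spin_cases[OF assms(1)] spin_cases[OF assms(2)] spin_cases[OF assms(3)]
  unfolding cBL_def cTL_def
  by (elim disjE; simp add: expb_values corner_weight_spins;
      simp add: algebra_simps sqrt2_times_sqrt2 sqrt2_times_sqrt2_assoc)

lemma local_identity_right:
  assumes "r0 \<in> {-1, 1}" "r1 \<in> {-1, 1}" "t0 \<in> {-1, 1}"
  shows "((1 + \<i>) + \<i> * sqrt2) / 2 * expb (- (r0 * r1)) * corner_weight cBR r0 r1
       + ((1 - \<i>) - \<i> * sqrt2) / 2 * expb (- (t0 * r1)) * corner_weight cTR (- t0) r1 = 0"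
  using spin_cases[OF assms(1)] spin_cases[OF assms(2)] spin_cases[OF assms(3)]
  unfolding cBR_def cTR_def
  by (elim disjE; simp add: expb_values corner_weight_spins;
      simp add: algebra_simps sqrt2_times_sqrt2 sqrt2_times_sqrt2_assoc)

definition left_interp :: "(int \<Rightarrow> complex \<Rightarrow> op) \<Rightarrow> (int \<Rightarrow> complex \<Rightarrow> op) \<Rightarrow> int \<Rightarrow> complex \<Rightarrow> op" where
  "left_interp H H' k = interp cBL cTL (H k cBL) (H' k cTL)"

definition right_interp :: "(int \<Rightarrow> complex \<Rightarrow> op) \<Rightarrow> (int \<Rightarrow> complex \<Rightarrow> op) \<Rightarrow> int \<Rightarrow> complex \<Rightarrow> op" where
  "right_interp H H' k = interp cBR cTR (H k cBR) (H' k cTR)"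

text \<open>\<open>H k c\<close> and \<open>H' k c\<close> play the role of \<open>\<psi>(e) + c \<psi>\<^sup>*(e)\<close> on the lower and the upper
  horizontal edge \<open>e\<close> of the \<open>k\<close>-th face of a row. A face determines the same quantity on its
  left and right sides by interpolating between its corners. The relations say that the
  vertical edge shared by two faces gets the same value from both of them, unless it is
  pinned, and that a pinned edge satisfies the boundary condition of its side.\<close>
definition row_relations ::
  "int \<Rightarrow> int \<Rightarrow> int set \<Rightarrow> (int \<Rightarrow> complex \<Rightarrow> op) \<Rightarrow> (int \<Rightarrow> complex \<Rightarrow> op) \<Rightarrow> bool" where
  "row_relations a b D H H' \<longleftrightarrow>
     (\<forall>x. a < x \<and> x < b \<and> x \<notin> D \<longrightarrow>
        left_interp H H' x cBR = H (x - 1) cBR \<and> left_interp H H' x cTR = H' (x - 1) cTR) \<and>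
     (\<forall>k. a \<le> k \<and> k < b \<and> k \<in> D \<longrightarrow> left_interp H H' k \<i> = mzero) \<and>
     (\<forall>k. a \<le> k \<and> k < b \<and> k + 1 \<in> D \<longrightarrow> right_interp H H' k (- \<i>) = mzero)"

lemma row_relations_map:
  assumes f: "op_linear f" and rel: "row_relations a b D H H'"
  shows "row_relations a b D (\<lambda>k c. f (H k c)) (\<lambda>k c. f (H' k c))"
proof -
  have "left_interp (\<lambda>k c. f (H k c)) (\<lambda>k c. f (H' k c)) k c = f (left_interp H H' k c)"
    and "right_interp (\<lambda>k c. f (H k c)) (\<lambda>k c. f (H' k c)) k c = f (right_interp H H' k c)" for k c
    using f by (simp_all add: left_interp_def right_interp_def op_linear_interp)
  with rel show ?thesis
    unfolding row_relations_def by (simp add: op_linear_mzero[OF f])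
qed

context
  fixes a b :: int and D :: "int set"
begin

abbreviation transfer_left_row :: "int \<Rightarrow> complex \<Rightarrow> op" where
  "transfer_left_row k c \<equiv> mmult a b (transfer a b D) (psi_corner a b k c)"

abbreviation transfer_right_row :: "int \<Rightarrow> complex \<Rightarrow> op" where
  "transfer_right_row k c \<equiv> mmult a b (psi_corner a b k c) (transfer a b D)"

lemma left_interp_transfer_Ops: "left_interp transfer_left_row transfer_right_row k c \<in> Ops a b"
  unfolding left_interp_def by (intro interp_Ops mmult_Ops)

lemma transfer_relation_lower:
  assumes "a < x" "x < b" "x \<notin> D"
  shows "left_interp transfer_left_row transfer_right_row x cBR = transfer_left_row (x - 1) cBR"
proof (rule Ops_eqI[OF left_interp_transfer_Ops mmult_Ops])
  fix \<tau> \<rho> assume \<tau>: "\<tau> \<in> Conf a b" and \<rho>: "\<rho> \<in> Conf a b"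
  have "(1 - \<i>) * expb (- (\<rho> x * \<rho> (x + 1)) - 2 * \<rho> x * \<tau> x) * corner_weight cBL (\<rho> x) (\<rho> (x + 1))
       + \<i> * expb (- (\<tau> x * \<tau> (x + 1)) - 2 * \<rho> x * \<tau> x) * corner_weight cTL (- \<tau> x) (\<tau> (x + 1))
       = expb (- (\<rho> (x - 1) * \<rho> x)) * corner_weight cBR (\<rho> (x - 1)) (\<rho> x)"
    using assms by (intro local_identity_lower Conf_spin[OF \<rho>] Conf_spin[OF \<tau>]) auto
  from arg_cong[OF this, of "\<lambda>z. flip_entry a b D \<tau> \<rho> (x - 1) * z"] assms \<tau> \<rho>
  show "left_interp transfer_left_row transfer_right_row x cBR \<tau> \<rho> = transfer_left_row (x - 1) cBR \<tau> \<rho>"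
    by (simp add: left_interp_def interp_apply interp_coeffs transfer_psi_corner_apply
        psi_corner_transfer_apply flip_entry_step algebra_simps)
qed

lemma transfer_relation_upper:
  assumes "a < x" "x < b" "x \<notin> D"
  shows "left_interp transfer_left_row transfer_right_row x cTR = transfer_right_row (x - 1) cTR"
proof (rule Ops_eqI[OF left_interp_transfer_Ops mmult_Ops])
  fix \<tau> \<rho> assume \<tau>: "\<tau> \<in> Conf a b" and \<rho>: "\<rho> \<in> Conf a b"
  have "- \<i> * expb (- (\<rho> x * \<rho> (x + 1)) - 2 * \<rho> x * \<tau> x) * corner_weight cBL (\<rho> x) (\<rho> (x + 1))
       + (1 + \<i>) * expb (- (\<tau> x * \<tau> (x + 1)) - 2 * \<rho> x * \<tau> x) * corner_weight cTL (- \<tau> x) (\<tau> (x + 1))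
       = expb (- (\<tau> (x - 1) * \<tau> x)) * corner_weight cTR (- \<tau> (x - 1)) (\<tau> x)"
    using assms by (intro local_identity_upper Conf_spin[OF \<rho>] Conf_spin[OF \<tau>]) auto
  from arg_cong[OF this, of "\<lambda>z. flip_entry a b D \<tau> \<rho> (x - 1) * z"] assms \<tau> \<rho>
  show "left_interp transfer_left_row transfer_right_row x cTR \<tau> \<rho> = transfer_right_row (x - 1) cTR \<tau> \<rho>"
    by (simp add: left_interp_def interp_apply interp_coeffs transfer_psi_corner_apply
        psi_corner_transfer_apply flip_entry_step algebra_simps)
qed

lemma transfer_relation_left:
  assumes "a \<le> k" "k < b" "k \<in> D"
  shows "left_interp transfer_left_row transfer_right_row k \<i> = mzero"
proof (rule Ops_eqI[OF left_interp_transfer_Ops mzero_Ops])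
  fix \<tau> \<rho> assume \<tau>: "\<tau> \<in> Conf a b" and \<rho>: "\<rho> \<in> Conf a b"
  show "left_interp transfer_left_row transfer_right_row k \<i> \<tau> \<rho> = mzero \<tau> \<rho>"
  proof (cases "agree_on D \<tau> (vsig k \<rho>)")
    case True
    then have flip: "\<tau> k = - \<rho> k" using assms by (simp add: agree_on_def vsig_apply)
    have "((1 - \<i>) - \<i> * sqrt2) / 2 * expb (- (\<rho> k * \<rho> (k + 1))) * corner_weight cBL (\<rho> k) (\<rho> (k + 1))
        + ((1 + \<i>) + \<i> * sqrt2) / 2 * expb (\<rho> k * \<tau> (k + 1)) * corner_weight cTL (\<rho> k) (\<tau> (k + 1)) = 0"
      using assms by (intro local_identity_left Conf_spin[OF \<rho>] Conf_spin[OF \<tau>]) auto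
    from arg_cong[OF this, of "\<lambda>z. flip_entry a b D \<tau> \<rho> k * z"] assms \<tau> \<rho> flip show ?thesis
      by (simp add: left_interp_def interp_apply interp_coeffs transfer_psi_corner_apply
          psi_corner_transfer_apply mzero_def algebra_simps)
  qed (use assms \<tau> \<rho> in \<open>simp add: left_interp_def interp_apply transfer_psi_corner_apply
         psi_corner_transfer_apply flip_entry_eq_0 mzero_def\<close>)
qed

lemma transfer_relation_right:
  assumes "a \<le> k" "k < b" "k + 1 \<in> D"
  shows "right_interp transfer_left_row transfer_right_row k (- \<i>) = mzero"
proof (rule Ops_eqI[OF _ mzero_Ops])
  show "right_interp transfer_left_row transfer_right_row k (- \<i>) \<in> Ops a b"
    unfolding right_interp_def by (intro interp_Ops mmult_Ops)
  fix \<tau> \<rho> assume \<tau>: "\<tau> \<in> Conf a b" and \<rho>: "\<rho> \<in> Conf a b"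
  show "right_interp transfer_left_row transfer_right_row k (- \<i>) \<tau> \<rho> = mzero \<tau> \<rho>"
  proof (cases "agree_on D \<tau> (vsig k \<rho>)")
    case True
    then have pinned: "\<tau> (k + 1) = \<rho> (k + 1)" using assms by (simp add: agree_on_def vsig_apply)
    have "((1 + \<i>) + \<i> * sqrt2) / 2 * expb (- (\<rho> k * \<rho> (k + 1))) * corner_weight cBR (\<rho> k) (\<rho> (k + 1))
        + ((1 - \<i>) - \<i> * sqrt2) / 2 * expb (- (\<tau> k * \<rho> (k + 1))) * corner_weight cTR (- \<tau> k) (\<rho> (k + 1))
        = 0"
      using assms by (intro local_identity_right Conf_spin[OF \<rho>] Conf_spin[OF \<tau>]) auto
    from arg_cong[OF this, of "\<lambda>z. flip_entry a b D \<tau> \<rho> k * z"] assms \<tau> \<rho> pinned show ?thesis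
      unfolding right_interp_def interp_apply interp_coeffs
      by (simp add: transfer_psi_corner_apply
          psi_corner_transfer_apply mzero_def algebra_simps)
  qed (use assms \<tau> \<rho> in \<open>simp add: right_interp_def interp_apply transfer_psi_corner_apply
         psi_corner_transfer_apply flip_entry_eq_0 mzero_def\<close>)
qed

lemma transfer_row_relations: "row_relations a b D transfer_left_row transfer_right_row"
  unfolding row_relations_def
  using transfer_relation_lower transfer_relation_upper transfer_relation_left transfer_relation_right
  by blast

end

definition hor_corner :: "int \<Rightarrow> int \<Rightarrow> int \<Rightarrow> int \<Rightarrow> complex \<Rightarrow> op" where
  "hor_corner a b y k c = corner c (hor_psi a b psi k y) (hor_psi a b psis k y)"

text \<open>The sites where the vertical transfer matrix between the rows \<open>y\<close> and \<open>y + 1\<close> keeps the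
  spin fixed (the Kronecker deltas in \<open>T\<^sub>v\<close> and \<open>T\<^sub>v\<^sup>s\<^sup>l\<^sup>i\<^sup>t\<close>).\<close>
definition pinned_sites :: "int \<Rightarrow> int \<Rightarrow> int \<Rightarrow> int set" where
  "pinned_sites a b y = (if 0 \<le> y then {a, b} else {a, 0, b})"

lemma hor_psi_upper:
  assumes "a \<le> b"
  shows "hor_psi a b P k (int n)
       = mmult a b (mmult a b (mpow a b (transfer_inv a b {a, b}) n) (P a b k))
                   (mpow a b (transfer a b {a, b}) n)"
  using assms unfolding hor_psi_def Tmat_eq_transfer by (simp add: minv_transfer)

lemma hor_psi_lower:
  assumes "a \<le> 0" "0 \<le> b"
  shows "hor_psi a b P k (- int n)
       = mmult a b (mmult a b (mpow a b (transfer a b {a, 0, b}) n) (P a b k))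
                   (mpow a b (transfer_inv a b {a, 0, b}) n)"
proof (cases "n = 0")
  case False
  then show ?thesis using assms unfolding hor_psi_def Tslit_eq_transfer by (simp add: minv_transfer)
qed (simp add: hor_psi_def)

lemma hor_corner_upper:
  "a \<le> b \<Longrightarrow> hor_corner a b (int n) k c
     = mmult a b (mmult a b (mpow a b (transfer_inv a b {a, b}) n) (psi_corner a b k c))
                 (mpow a b (transfer a b {a, b}) n)"
  by (simp add: hor_corner_def hor_psi_upper mmult_madd_left mmult_madd_right
      mmult_msc_left mmult_msc_right)

lemma hor_corner_lower:
  "a \<le> 0 \<Longrightarrow> 0 \<le> b \<Longrightarrow> hor_corner a b (- int n) k c
     = mmult a b (mmult a b (mpow a b (transfer a b {a, 0, b}) n) (psi_corner a b k c))
                 (mpow a b (transfer_inv a b {a, 0, b}) n)"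
  by (simp add: hor_corner_def hor_psi_lower mmult_madd_left mmult_madd_right
      mmult_msc_left mmult_msc_right)

lemma hor_row_relations_upper:
  assumes "a \<le> b"
  shows "row_relations a b {a, b} (hor_corner a b (int n)) (hor_corner a b (int (Suc n)))"
proof -
  let ?T = "transfer a b {a, b}" and ?Ti = "transfer_inv a b {a, b}"
  define f where "f = (\<lambda>X. mmult a b X (mpow a b ?T n)) \<circ> mmult a b (mpow a b ?Ti n) \<circ> mmult a b ?Ti"
  have "op_linear f"
    unfolding f_def by (intro op_linear_comp op_linear_mmult_left op_linear_mmult_right)
  from row_relations_map[OF this transfer_row_relations]
  have rel: "row_relations a b {a, b} (\<lambda>k c. f (transfer_left_row a b {a, b} k c))
                                       (\<lambda>k c. f (transfer_right_row a b {a, b} k c))" .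
  have inv: "mmult a b ?Ti ?T = mid a b" using assms by (intro transfer_inverse) auto
  have "f (transfer_left_row a b {a, b} k c) = hor_corner a b (int n) k c" for k c
    using assms by (simp add: f_def hor_corner_upper mmult_cancel_left inv psi_corner_Ops)
  moreover have "f (transfer_right_row a b {a, b} k c) = hor_corner a b (int (Suc n)) k c" for k c
  proof -
    have "mpow a b ?Ti (Suc n) = mmult a b (mpow a b ?Ti n) ?Ti"
      by (rule mpow_Suc_right[OF transfer_inv_Ops])
    moreover have "mpow a b ?T (Suc n) = mmult a b ?T (mpow a b ?T n)" by simp
    ultimately show ?thesis
      using assms hor_corner_upper[of a b "Suc n"] by (simp add: f_def mmult_assoc)
  qed
  ultimately show ?thesis using rel by simp
qed

lemma hor_row_relations_lower:
  assumes "a \<le> 0" "0 \<le> b"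
  shows "row_relations a b {a, 0, b} (hor_corner a b (- int (Suc n))) (hor_corner a b (- int n))"
proof -
  let ?S = "transfer a b {a, 0, b}" and ?Si = "transfer_inv a b {a, 0, b}"
  define f where
    "f = (\<lambda>X. mmult a b X (mpow a b ?Si n)) \<circ> mmult a b (mpow a b ?S n) \<circ> (\<lambda>X. mmult a b X ?Si)"
  have "op_linear f"
    unfolding f_def by (intro op_linear_comp op_linear_mmult_left op_linear_mmult_right)
  from row_relations_map[OF this transfer_row_relations]
  have rel: "row_relations a b {a, 0, b} (\<lambda>k c. f (transfer_left_row a b {a, 0, b} k c))
                                          (\<lambda>k c. f (transfer_right_row a b {a, 0, b} k c))" .
  have inv: "mmult a b ?S ?Si = mid a b" using assms by (intro transfer_inverse) auto
  have "f (transfer_right_row a b {a, 0, b} k c) = hor_corner a b (- int n) k c" for k c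
    using assms
    by (simp add: f_def hor_corner_lower mmult_assoc inv mmult_mid_right psi_corner_Ops)
  moreover have "f (transfer_left_row a b {a, 0, b} k c) = hor_corner a b (- int (Suc n)) k c" for k c
  proof -
    have "mpow a b ?S (Suc n) = mmult a b (mpow a b ?S n) ?S"
      by (rule mpow_Suc_right[OF transfer_Ops])
    moreover have "mpow a b ?Si (Suc n) = mmult a b ?Si (mpow a b ?Si n)" by simp
    ultimately show ?thesis
      using assms hor_corner_lower[of a b "Suc n"] by (simp add: f_def mmult_assoc)
  qed
  ultimately show ?thesis using rel by simp
qed

lemma hor_row_relations:
  assumes "a < 0" "0 < b"
  shows "row_relations a b (pinned_sites a b y) (hor_corner a b y) (hor_corner a b (y + 1))"
proof (cases "0 \<le> y")
  case True
  define n where "n = nat y"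
  have y: "y = int n" and y1: "y + 1 = int (Suc n)" using True by (simp_all add: n_def)
  have "row_relations a b {a, b} (hor_corner a b (int n)) (hor_corner a b (int (Suc n)))"
    using hor_row_relations_upper[of a b n] assms by simp
  then show ?thesis
    unfolding y1 unfolding y pinned_sites_def by simp
next
  case False
  define n where "n = nat (- y - 1)"
  have y: "y = - int (Suc n)" and y1: "y + 1 = - int n" using False by (simp_all add: n_def)
  have "row_relations a b {a, 0, b} (hor_corner a b (- int (Suc n))) (hor_corner a b (- int n))"
    using hor_row_relations_lower[of a b n] assms by simp
  then show ?thesis
    unfolding y1 unfolding y pinned_sites_def by simp
qed

section \<open>Membership in \<open>CliffGen\<close>\<close>

lemma CliffGen_madd:
  assumes "X \<in> CliffGen a b" "Y \<in> CliffGen a b"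
  shows "madd X Y \<in> CliffGen a b"
proof -
  obtain c d c' d' where
    X: "X = (\<lambda>\<tau> \<rho>. \<Sum>k\<in>{a..<b}. c k * psi a b k \<tau> \<rho> + d k * psis a b k \<tau> \<rho>)" and
    Y: "Y = (\<lambda>\<tau> \<rho>. \<Sum>k\<in>{a..<b}. c' k * psi a b k \<tau> \<rho> + d' k * psis a b k \<tau> \<rho>)"
    using assms unfolding CliffGen_def by blast
  show ?thesis unfolding CliffGen_def
    by (rule CollectI, rule exI[of _ "\<lambda>k. c k + c' k"], rule exI[of _ "\<lambda>k. d k + d' k"])
       (simp add: X Y madd_def sum.distrib[symmetric] algebra_simps)
qed

lemma CliffGen_msc:
  assumes "X \<in> CliffGen a b"
  shows "msc u X \<in> CliffGen a b"
proof -
  obtain c d where X: "X = (\<lambda>\<tau> \<rho>. \<Sum>k\<in>{a..<b}. c k * psi a b k \<tau> \<rho> + d k * psis a b k \<tau> \<rho>)"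
    using assms unfolding CliffGen_def by blast
  show ?thesis unfolding CliffGen_def
    by (rule CollectI, rule exI[of _ "\<lambda>k. u * c k"], rule exI[of _ "\<lambda>k. u * d k"])
       (simp add: X msc_def sum_distrib_left algebra_simps)
qed

lemma CliffGen_mzero: "mzero \<in> CliffGen a b"
  unfolding CliffGen_def mzero_def by (rule CollectI, rule exI[of _ "\<lambda>_. 0"], rule exI[of _ "\<lambda>_. 0"]) simp

lemma CliffGen_psi: "a \<le> k \<Longrightarrow> k < b \<Longrightarrow> psi a b k \<in> CliffGen a b"
  unfolding CliffGen_def
proof (rule CollectI, rule exI[of _ "\<lambda>j. if j = k then 1 else 0"], rule exI[of _ "\<lambda>_. 0"], intro ext)
  fix \<tau> \<rho> assume "a \<le> k" "k < b"
  then show "psi a b k \<tau> \<rho>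
    = (\<Sum>j\<in>{a..<b}. (if j = k then 1 else 0) * psi a b j \<tau> \<rho> + 0 * psis a b j \<tau> \<rho>)"
    by (simp add: if_distrib[of "\<lambda>z. z * _"] cong: if_cong)
qed

lemma CliffGen_psis: "a \<le> k \<Longrightarrow> k < b \<Longrightarrow> psis a b k \<in> CliffGen a b"
  unfolding CliffGen_def
proof (rule CollectI, rule exI[of _ "\<lambda>_. 0"], rule exI[of _ "\<lambda>j. if j = k then 1 else 0"], intro ext)
  fix \<tau> \<rho> assume "a \<le> k" "k < b"
  then show "psis a b k \<tau> \<rho>
    = (\<Sum>j\<in>{a..<b}. 0 * psi a b j \<tau> \<rho> + (if j = k then 1 else 0) * psis a b j \<tau> \<rho>)"
    by (simp add: if_distrib[of "\<lambda>z. z * _"] cong: if_cong)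
qed

lemma CliffGen_interp:
  "U \<in> CliffGen a b \<Longrightarrow> V \<in> CliffGen a b \<Longrightarrow> interp c0 c1 U V c \<in> CliffGen a b"
  unfolding interp_def by (intro CliffGen_madd CliffGen_msc)

lemma CliffGen_interp_end:
  assumes "interp c0 c1 U V c \<in> CliffGen a b" "U \<in> CliffGen a b" "c \<noteq> c0" "c0 \<noteq> c1"
  shows "V \<in> CliffGen a b"
proof -
  have "c - c0 \<noteq> 0" "c1 - c0 \<noteq> 0" using assms(3,4) by auto
  then have eq: "V = madd (msc ((c1 - c0) / (c - c0)) (interp c0 c1 U V c)) (msc (- (c1 - c) / (c - c0)) U)"
    by (simp add: fun_eq_iff interp_apply madd_def msc_def divide_simps) (simp add: algebra_simps)
  show ?thesis by (subst eq) (intro CliffGen_madd CliffGen_msc assms(1,2))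
qed

lemma CliffGen_interp_start:
  assumes "interp c0 c1 U V c \<in> CliffGen a b" "V \<in> CliffGen a b" "c \<noteq> c1" "c0 \<noteq> c1"
  shows "U \<in> CliffGen a b"
proof -
  have "c1 - c \<noteq> 0" "c1 - c0 \<noteq> 0" using assms(3,4) by auto
  then have eq: "U = madd (msc ((c1 - c0) / (c1 - c)) (interp c0 c1 U V c)) (msc (- (c - c0) / (c1 - c)) V)"
    by (simp add: fun_eq_iff interp_apply madd_def msc_def divide_simps) (simp add: algebra_simps)
  show ?thesis by (subst eq) (intro CliffGen_madd CliffGen_msc assms(1,2))
qed

lemma corner_pair_decompose:
  "c1 \<noteq> c2 \<Longrightarrow> Xs = msc (1 / (c1 - c2)) (madd (corner c1 X Xs) (msc (- 1) (corner c2 X Xs)))"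
  "X = madd (corner c1 X Xs) (msc (- c1) Xs)"
  by (simp_all add: fun_eq_iff madd_def msc_def divide_simps) (simp add: algebra_simps)

lemma CliffGen_corner_pair:
  assumes "corner c1 X Xs \<in> CliffGen a b" "corner c2 X Xs \<in> CliffGen a b" "c1 \<noteq> c2"
  shows "X \<in> CliffGen a b \<and> Xs \<in> CliffGen a b"
proof -
  have Xs: "Xs \<in> CliffGen a b"
    by (subst corner_pair_decompose(1)[OF assms(3), where X = X and Xs = Xs]) (intro CliffGen_madd CliffGen_msc assms(1,2))
  have "X \<in> CliffGen a b"
    by (subst corner_pair_decompose(2)[of X c1 Xs]) (intro CliffGen_madd CliffGen_msc assms(1) Xs)
  with Xs show ?thesis by blast
qed

text \<open>Solving the row relations for one row in terms of the other; the boundary relations at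
  the pinned sites \<open>a\<close> and \<open>b\<close> start the recursion along the row.\<close>

lemma row_relations_CliffGen_up:
  assumes rel: "row_relations a b D H H'" and D: "a \<in> D" "b \<in> D"
    and H: "\<And>k c. a \<le> k \<Longrightarrow> k < b \<Longrightarrow> H k c \<in> CliffGen a b"
    and k: "a \<le> k" "k < b"
  shows "H' k cTL \<in> CliffGen a b \<and> H' k cTR \<in> CliffGen a b"
proof -
  have TL: "H' j cTL \<in> CliffGen a b" if j: "a \<le> j" "j < b" for j
  proof (cases "j \<in> D")
    case True
    then have ic: "interp cBL cTL (H j cBL) (H' j cTL) \<i> \<in> CliffGen a b"
      using rel j CliffGen_mzero unfolding row_relations_def left_interp_def by auto
    show ?thesis by (rule CliffGen_interp_end[OF ic H[OF j]]) (use corner_coeffs_distinct in auto)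
  next
    case False
    with D j have "a < j" by (cases "j = a") auto
    then have ic: "interp cBL cTL (H j cBL) (H' j cTL) cBR \<in> CliffGen a b"
      using rel j False H[of "j - 1"] unfolding row_relations_def left_interp_def by auto
    show ?thesis by (rule CliffGen_interp_end[OF ic H[OF j]]) (use corner_coeffs_distinct in auto)
  qed
  have TR: "H' k cTR \<in> CliffGen a b"
  proof (cases "k + 1 \<in> D")
    case True
    then have ic: "interp cBR cTR (H k cBR) (H' k cTR) (- \<i>) \<in> CliffGen a b"
      using rel k CliffGen_mzero unfolding row_relations_def right_interp_def by auto
    show ?thesis by (rule CliffGen_interp_end[OF ic H[OF k]]) (use corner_coeffs_distinct in auto)
  next
    case False
    with D k have "k + 1 < b" by (cases "k + 1 = b") auto
    then have "interp cBL cTL (H (k + 1) cBL) (H' (k + 1) cTL) cTR = H' k cTR"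
      using rel k False unfolding row_relations_def left_interp_def by auto
    moreover have "interp cBL cTL (H (k + 1) cBL) (H' (k + 1) cTL) cTR \<in> CliffGen a b"
      using H TL \<open>k + 1 < b\<close> k by (intro CliffGen_interp) auto
    ultimately show ?thesis by simp
  qed
  show ?thesis using TL[OF k] TR by blast
qed

lemma row_relations_CliffGen_down:
  assumes rel: "row_relations a b D H H'" and D: "a \<in> D" "b \<in> D"
    and H': "\<And>k c. a \<le> k \<Longrightarrow> k < b \<Longrightarrow> H' k c \<in> CliffGen a b"
    and k: "a \<le> k" "k < b"
  shows "H k cBL \<in> CliffGen a b \<and> H k cBR \<in> CliffGen a b"
proof -
  have BL: "H j cBL \<in> CliffGen a b" if j: "a \<le> j" "j < b" for j
  proof (cases "j \<in> D")
    case True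
    then have ic: "interp cBL cTL (H j cBL) (H' j cTL) \<i> \<in> CliffGen a b"
      using rel j CliffGen_mzero unfolding row_relations_def left_interp_def by auto
    show ?thesis by (rule CliffGen_interp_start[OF ic H'[OF j]]) (use corner_coeffs_distinct in auto)
  next
    case False
    with D j have "a < j" by (cases "j = a") auto
    then have ic: "interp cBL cTL (H j cBL) (H' j cTL) cTR \<in> CliffGen a b"
      using rel j False H'[of "j - 1"] unfolding row_relations_def left_interp_def by auto
    show ?thesis by (rule CliffGen_interp_start[OF ic H'[OF j]]) (use corner_coeffs_distinct in auto)
  qed
  have BR: "H k cBR \<in> CliffGen a b"
  proof (cases "k + 1 \<in> D")
    case True
    then have ic: "interp cBR cTR (H k cBR) (H' k cTR) (- \<i>) \<in> CliffGen a b"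
      using rel k CliffGen_mzero unfolding row_relations_def right_interp_def by auto
    show ?thesis by (rule CliffGen_interp_start[OF ic H'[OF k]]) (use corner_coeffs_distinct in auto)
  next
    case False
    with D k have "k + 1 < b" by (cases "k + 1 = b") auto
    then have "interp cBL cTL (H (k + 1) cBL) (H' (k + 1) cTL) cBR = H k cBR"
      using rel k False unfolding row_relations_def left_interp_def by auto
    moreover have "interp cBL cTL (H (k + 1) cBL) (H' (k + 1) cTL) cBR \<in> CliffGen a b"
      using H' BL \<open>k + 1 < b\<close> k by (intro CliffGen_interp) auto
    ultimately show ?thesis by simp
  qed
  show ?thesis using BL[OF k] BR by blast
qed

lemma psi_Ops: "psi a b k \<in> Ops a b"
  unfolding psi_def by (rule mk_op_Ops)

lemma psis_Ops: "psis a b k \<in> Ops a b"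
  unfolding psis_def by (rule mk_op_Ops)

lemma hor_psi_zero: "a \<le> b \<Longrightarrow> P a b k \<in> Ops a b \<Longrightarrow> hor_psi a b P k 0 = P a b k"
  using hor_psi_upper[of a b P k 0] by (simp add: mmult_mid_left mmult_mid_right mmult_Ops)

lemma hor_psi_CliffGen:
  assumes ab: "a < 0" "0 < b" and k: "a \<le> k" "k < b"
  shows "hor_psi a b psi k y \<in> CliffGen a b \<and> hor_psi a b psis k y \<in> CliffGen a b"
proof -
  define row where "row y \<longleftrightarrow>
    (\<forall>k. a \<le> k \<and> k < b \<longrightarrow> hor_psi a b psi k y \<in> CliffGen a b \<and> hor_psi a b psis k y \<in> CliffGen a b)"
    for y
  have corners: "hor_corner a b y k c \<in> CliffGen a b" if "row y" "a \<le> k" "k < b" for y k c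
    using that unfolding row_def hor_corner_def by (blast intro: CliffGen_madd CliffGen_msc)
  have pinned: "a \<in> pinned_sites a b y" "b \<in> pinned_sites a b y" for y
    by (simp_all add: pinned_sites_def)
  have "row y"
  proof (induction y rule: int_induct[where k = 0])
    case base
    show ?case
      unfolding row_def using ab by (simp add: hor_psi_zero psi_Ops psis_Ops CliffGen_psi CliffGen_psis)
  next
    case (step1 i)
    have "hor_corner a b (i + 1) k cTL \<in> CliffGen a b \<and> hor_corner a b (i + 1) k cTR \<in> CliffGen a b"
      if "a \<le> k" "k < b" for k
      using row_relations_CliffGen_up[OF hor_row_relations[OF ab] pinned corners[OF step1(2)] that] .
    then show ?case
      unfolding row_def hor_corner_def using CliffGen_corner_pair corner_coeffs_distinct(4) by blast
  next
    case (step2 i)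
    have rel: "row_relations a b (pinned_sites a b (i - 1)) (hor_corner a b (i - 1)) (hor_corner a b i)"
      using hor_row_relations[OF ab, of "i - 1"] by simp
    have "hor_corner a b (i - 1) k cBL \<in> CliffGen a b \<and> hor_corner a b (i - 1) k cBR \<in> CliffGen a b"
      if "a \<le> k" "k < b" for k
      using row_relations_CliffGen_down[OF rel pinned corners[OF step2(2)] that] .
    then show ?case
      unfolding row_def hor_corner_def using CliffGen_corner_pair corner_coeffs_distinct(3) by blast
  qed
  then show ?thesis using k unfolding row_def by blast
qed

section \<open>The extension to all edges\<close>

definition corner_coeff :: "int \<Rightarrow> int \<Rightarrow> complex \<Rightarrow> complex" where
  "corner_coeff x y v = \<i> * complex_of_real (cmod (v - face_centre x y)) / (v - face_centre x y)"

lemma i_cmod_div_diagonal: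
  fixes u w :: real
  assumes "u\<^sup>2 = 1" "w\<^sup>2 = 1"
  shows "\<i> * complex_of_real (cmod (Complex (u / 2) (w / 2))) / Complex (u / 2) (w / 2)
       = \<i> * (u - \<i> * w) / sqrt2"
proof -
  let ?z = "complex_of_real u + \<i> * complex_of_real w"
  have z: "Complex (u / 2) (w / 2) = ?z / 2" by (simp add: complex_eq_iff)
  have "cmod (Complex (u / 2) (w / 2)) = sqrt (1 / 2)"
    unfolding cmod_def using assms by (simp add: power_divide)
  also have "\<dots> = sqrt 2 / 2" by (simp add: real_sqrt_divide field_simps)
  finally have norm: "cmod (Complex (u / 2) (w / 2)) = sqrt 2 / 2" .
  have nonzero: "?z \<noteq> 0" using assms by (auto simp: complex_eq_iff)
  have "(complex_of_real u - \<i> * complex_of_real w) * ?z = 2"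
    using assms by (simp add: algebra_simps power2_eq_square flip: of_real_mult)
  then have "\<i> * sqrt2 / ?z = \<i> * (complex_of_real u - \<i> * complex_of_real w) / sqrt2"
    using nonzero sqrt2_nonzero sqrt2_times_sqrt2 by (simp add: frac_eq_eq mult.assoc mult.left_commute)
  then show ?thesis unfolding norm unfolding z by (simp add: sqrt2_def)
qed

lemma corner_coeff_values:
  "corner_coeff x y (pt x y) = cBL" "corner_coeff x y (pt (x + 1) y) = cBR"
  "corner_coeff x y (pt x (y + 1)) = cTL" "corner_coeff x y (pt (x + 1) (y + 1)) = cTR"
proof -
  have "pt x y - face_centre x y = Complex ((-1) / 2) ((-1) / 2)"
    "pt (x + 1) y - face_centre x y = Complex (1 / 2) ((-1) / 2)"
    "pt x (y + 1) - face_centre x y = Complex ((-1) / 2) (1 / 2)"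
    "pt (x + 1) (y + 1) - face_centre x y = Complex (1 / 2) (1 / 2)"
    by (simp_all add: pt_def face_centre_def complex_eq_iff)
  then show "corner_coeff x y (pt x y) = cBL" "corner_coeff x y (pt (x + 1) y) = cBR"
    "corner_coeff x y (pt x (y + 1)) = cTL" "corner_coeff x y (pt (x + 1) (y + 1)) = cTR"
    unfolding corner_coeff_def
    by (simp_all only: i_cmod_div_diagonal[of "-1" "-1"] i_cmod_div_diagonal[of 1 "-1"]
        i_cmod_div_diagonal[of "-1" 1] i_cmod_div_diagonal[of 1 1] power2_eq_square)
       (simp_all add: cBL_def cBR_def cTL_def cTR_def algebra_simps)
qed

lemma pt_eq_iff [simp]: "pt x y = pt x' y' \<longleftrightarrow> x = x' \<and> y = y'"
  unfolding pt_def by simp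

text \<open>\<open>edge_family a b e c\<close> is the value of \<open>\<psi>(e) + c \<psi>\<^sup>*(e)\<close> for the extension: on a
  horizontal edge it is prescribed, and a vertical edge takes it from the corners of a face on
  its side.\<close>
definition edge_family :: "int \<Rightarrow> int \<Rightarrow> edge \<Rightarrow> complex \<Rightarrow> op" where
  "edge_family a b e = (case e of
       Hor k y \<Rightarrow> hor_corner a b y k
     | Ver x y \<Rightarrow>
         if x < b then left_interp (hor_corner a b y) (hor_corner a b (y + 1)) x
         else right_interp (hor_corner a b y) (hor_corner a b (y + 1)) (b - 1)
     | SlitM y \<Rightarrow> right_interp (hor_corner a b y) (hor_corner a b (y + 1)) (- 1)
     | SlitP y \<Rightarrow> left_interp (hor_corner a b y) (hor_corner a b (y + 1)) 0)"

definition ext_psi :: "int \<Rightarrow> int \<Rightarrow> edge \<Rightarrow> op" where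
  "ext_psi a b e = edge_family a b e 0"

definition ext_psis :: "int \<Rightarrow> int \<Rightarrow> edge \<Rightarrow> op" where
  "ext_psis a b e = madd (edge_family a b e 1) (msc (- 1) (edge_family a b e 0))"

lemma corner_ext_psi: "corner c (ext_psi a b e) (ext_psis a b e) = edge_family a b e c"
proof (cases e)
  case Hor
  then show ?thesis
    by (simp add: ext_psi_def ext_psis_def edge_family_def hor_corner_def fun_eq_iff madd_def msc_def)
qed (use corner_coeffs_distinct in \<open>simp_all add: ext_psi_def ext_psis_def edge_family_def
       left_interp_def right_interp_def corner_interp\<close>)

lemma edge_family_left_side:
  assumes "a \<le> x" "x < b" and z: "z = (if x = 0 \<and> y < 0 then SlitP y else Ver x y)"
  shows "edge_family a b z cBL = hor_corner a b y x cBL"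
    and "edge_family a b z cTL = hor_corner a b (y + 1) x cTL"
  using assms corner_coeffs_distinct
  by (auto simp: edge_family_def left_interp_def interp_start interp_end)

lemma edge_family_right_side:
  assumes ab: "a < 0" "0 < b" and x: "a \<le> x" "x < b"
    and z: "z = (if x + 1 = 0 \<and> y < 0 then SlitM y else Ver (x + 1) y)"
  shows "edge_family a b z cBR = hor_corner a b y x cBR"
    and "edge_family a b z cTR = hor_corner a b (y + 1) x cTR"
proof -
  have "edge_family a b z cBR = hor_corner a b y x cBR \<and> edge_family a b z cTR = hor_corner a b (y + 1) x cTR"
  proof (cases "x + 1 < b \<and> \<not> (x + 1 = 0 \<and> y < 0)")
    case True
    then have "x + 1 \<notin> pinned_sites a b y" using x by (auto simp: pinned_sites_def)
    then show ?thesis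
      using hor_row_relations[OF ab, of y] True x z unfolding row_relations_def
      by (auto simp: edge_family_def)
  next
    case False
    then have "x = b - 1 \<or> (x = -1 \<and> y < 0)" using x by auto
    then show ?thesis
      using corner_coeffs_distinct z
      by (auto simp: edge_family_def right_interp_def interp_start interp_end)
  qed
  then show "edge_family a b z cBR = hor_corner a b y x cBR"
    and "edge_family a b z cTR = hor_corner a b (y + 1) x cTR" by auto
qed

lemma edge_family_face:
  assumes ab: "a < 0" "0 < b" and x: "a \<le> x" "x < b" and z: "z \<in> face_edges x y" and v: "v \<in> endpoints z"
  shows "edge_family a b z (corner_coeff x y v)
       = (if v = pt x y \<or> v = pt (x + 1) y then hor_corner a b y x (corner_coeff x y v)
          else hor_corner a b (y + 1) x (corner_coeff x y v))"
proof -
  consider "z = Hor x y" | "z = Hor x (y + 1)" | "z = (if x = 0 \<and> y < 0 then SlitP y else Ver x y)"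
    | "z = (if x + 1 = 0 \<and> y < 0 then SlitM y else Ver (x + 1) y)"
    using z unfolding face_edges_def by blast
  then show ?thesis
  proof cases
    case 3
    then have "v = pt x y \<or> v = pt x (y + 1)" using v by (auto split: if_splits)
    then show ?thesis
      by (elim disjE) (simp_all add: corner_coeff_values edge_family_left_side[OF x 3])
  next
    case 4
    then have "v = pt (x + 1) y \<or> v = pt (x + 1) (y + 1)" using v by (auto split: if_splits)
    then show ?thesis
      by (elim disjE) (simp_all add: corner_coeff_values edge_family_right_side[OF ab x 4])
  qed (use v in \<open>auto simp: edge_family_def\<close>)
qed

lemma edge_family_boundary:
  assumes "a < 0" "0 < b"
  shows "edge_family a b (Ver a y) \<i> = mzero" and "y < 0 \<Longrightarrow> edge_family a b (SlitP y) \<i> = mzero"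
    and "edge_family a b (Ver b y) (- \<i>) = mzero" and "y < 0 \<Longrightarrow> edge_family a b (SlitM y) (- \<i>) = mzero"
  using assms hor_row_relations[OF assms, of y]
  by (auto simp: edge_family_def row_relations_def pinned_sites_def)

lemma edge_family_CliffGen:
  assumes ab: "a < 0" "0 < b" and e: "e \<in> Eslit a b"
  shows "edge_family a b e c \<in> CliffGen a b"
proof -
  have corner: "hor_corner a b y k c \<in> CliffGen a b" if "a \<le> k" "k < b" for y k c
    using hor_psi_CliffGen[OF ab that] unfolding hor_corner_def by (blast intro: CliffGen_madd CliffGen_msc)
  show ?thesis
    using e ab
    by (cases e)
       (auto simp: Eslit_def edge_family_def left_interp_def right_interp_def
        intro!: CliffGen_interp corner)
qed

lemma slit_ext_exists:
  assumes ab: "a < 0" "0 < b"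
  shows "slit_ext a b (ext_psi a b) (ext_psis a b)"
  unfolding slit_ext_def
proof (intro conjI allI impI ballI)
  fix e assume "e \<in> Eslit a b"
  then show "ext_psi a b e \<in> CliffGen a b" "ext_psis a b e \<in> CliffGen a b"
    unfolding ext_psi_def ext_psis_def
    by (blast intro: edge_family_CliffGen[OF ab] CliffGen_madd CliffGen_msc)+
next
  fix k y
  show "ext_psi a b (Hor k y) = hor_psi a b psi k y" "ext_psis a b (Hor k y) = hor_psi a b psis k y"
    by (simp_all add: ext_psi_def ext_psis_def edge_family_def hor_corner_def fun_eq_iff madd_def msc_def)
next
  fix x y z1 z2 v
  assume "a \<le> x \<and> x < b \<and> z1 \<in> face_edges x y \<and> z2 \<in> face_edges x y \<and> v \<in> endpoints z1 \<and> v \<in> endpoints z2"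
  then show "let p = face_centre x y; c = \<i> * complex_of_real (cmod (v - p)) / (v - p)
        in corner c (ext_psi a b z1) (ext_psis a b z1) = corner c (ext_psi a b z2) (ext_psis a b z2)"
    using edge_family_face[OF ab] by (simp add: Let_def corner_ext_psi flip: corner_coeff_def)
qed (use edge_family_boundary[OF ab] in \<open>simp_all add: corner_ext_psi\<close>)

section \<open>Uniqueness\<close>

lemma slit_ext_face:
  assumes "slit_ext a b ph phs" "a \<le> x" "x < b" "z1 \<in> face_edges x y" "z2 \<in> face_edges x y"
    "v \<in> endpoints z1" "v \<in> endpoints z2"
  shows "corner (corner_coeff x y v) (ph z1) (phs z1) = corner (corner_coeff x y v) (ph z2) (phs z2)"
  using assms unfolding slit_ext_def corner_coeff_def Let_def by blast

lemma slit_ext_hor: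
  "slit_ext a b ph phs \<Longrightarrow> a \<le> k \<Longrightarrow> k < b
   \<Longrightarrow> ph (Hor k y) = hor_psi a b psi k y \<and> phs (Hor k y) = hor_psi a b psis k y"
  unfolding slit_ext_def by blast

lemma corner_eq_pair:
  assumes "corner c1 X Xs = corner c1 Y Ys" "corner c2 X Xs = corner c2 Y Ys" "c1 \<noteq> c2"
  shows "X = Y \<and> Xs = Ys"
proof -
  have "Xs = msc (1 / (c1 - c2)) (madd (corner c1 X Xs) (msc (- 1) (corner c2 X Xs)))"
    by (rule corner_pair_decompose(1)[OF assms(3)])
  also have "\<dots> = msc (1 / (c1 - c2)) (madd (corner c1 Y Ys) (msc (- 1) (corner c2 Y Ys)))"
    by (simp only: assms(1,2))
  also have "\<dots> = Ys"
    by (rule corner_pair_decompose(1)[OF assms(3), symmetric])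
  finally have Xs: "Xs = Ys" .
  have "X = madd (corner c1 X Xs) (msc (- c1) Xs)"
    by (rule corner_pair_decompose(2))
  also have "\<dots> = madd (corner c1 Y Ys) (msc (- c1) Ys)"
    by (simp only: assms(1)) (simp only: Xs)
  also have "\<dots> = Y"
    by (rule corner_pair_decompose(2)[symmetric])
  finally show ?thesis using Xs by blast
qed

lemma slit_ext_unique_side:
  assumes S: "slit_ext a b ph phs" "slit_ext a b ph' phs'" and x: "a \<le> x" "x < b"
    and e: "e \<in> face_edges x y" and x': "x' = x \<or> x' = x + 1"
    and ends: "endpoints e = {pt x' y, pt x' (y + 1)}"
  shows "ph' e = ph e \<and> phs' e = phs e"
proof -
  have same: "corner (corner_coeff x y v) (ph' e) (phs' e) = corner (corner_coeff x y v) (ph e) (phs e)"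
    if "v \<in> endpoints e" "v \<in> endpoints (Hor x y')" "Hor x y' \<in> face_edges x y" for v y'
    using slit_ext_face[OF S(1) x e that(3) that(1,2)] slit_ext_face[OF S(2) x e that(3) that(1,2)]
      slit_ext_hor[OF S(1) x] slit_ext_hor[OF S(2) x] by simp
  have "corner (corner_coeff x y (pt x' y)) (ph' e) (phs' e)
      = corner (corner_coeff x y (pt x' y)) (ph e) (phs e)"
    using x' ends by (intro same[of _ y]) (auto simp: face_edges_def)
  moreover have "corner (corner_coeff x y (pt x' (y + 1))) (ph' e) (phs' e)
      = corner (corner_coeff x y (pt x' (y + 1))) (ph e) (phs e)"
    using x' ends by (intro same[of _ "y + 1"]) (auto simp: face_edges_def)
  moreover have "corner_coeff x y (pt x' y) \<noteq> corner_coeff x y (pt x' (y + 1))"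
    using x' corner_coeffs_distinct by (auto simp: corner_coeff_values)
  ultimately show ?thesis by (rule corner_eq_pair)
qed

lemma slit_ext_unique:
  assumes ab: "a < 0" "0 < b" and S: "slit_ext a b ph phs" "slit_ext a b ph' phs'"
    and e: "e \<in> Eslit a b"
  shows "ph' e = ph e \<and> phs' e = phs e"
proof (cases e)
  case (Hor k y)
  then show ?thesis using e slit_ext_hor[OF S(1)] slit_ext_hor[OF S(2)] by (auto simp: Eslit_def)
next
  case (Ver x m)
  then have x: "a \<le> x" "x \<le> b" "\<not> (x = 0 \<and> m < 0)" using e by (auto simp: Eslit_def)
  show ?thesis
  proof (cases "x < b")
    case True
    show ?thesis unfolding Ver
      by (rule slit_ext_unique_side[OF S x(1) True, where y = m and x' = x])
         (use x in \<open>auto simp: face_edges_def\<close>)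
  next
    case False
    then have "x = b" using x by simp
    have "a \<le> b - 1" "b - 1 < b" using ab by auto
    then show ?thesis unfolding Ver \<open>x = b\<close>
      by (rule slit_ext_unique_side[OF S, where y = m and x' = b])
         (use ab in \<open>auto simp: face_edges_def\<close>)
  qed
next
  case (SlitM m)
  have "a \<le> - 1" "- 1 < b" using ab by auto
  then show ?thesis unfolding SlitM
    by (rule slit_ext_unique_side[OF S, where y = m and x' = 0])
       (use e SlitM in \<open>auto simp: Eslit_def face_edges_def\<close>)
next
  case (SlitP m)
  have "a \<le> 0" "0 < b" using ab by auto
  then show ?thesis unfolding SlitP
    by (rule slit_ext_unique_side[OF S, where y = m and x' = 0])
       (use e SlitP in \<open>auto simp: Eslit_def face_edges_def\<close>)
qed

theorem proposition3p15:
  fixes a b :: int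
  assumes "a < 0" and "0 < b"
  shows "\<exists>ph phs. slit_ext a b ph phs \<and>
           (\<forall>ph' phs'. slit_ext a b ph' phs' \<longrightarrow>
              (\<forall>e\<in>Eslit a b. ph' e = ph e \<and> phs' e = phs e))"
  using slit_ext_exists[OF assms] slit_ext_unique[OF assms] by blast

end
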